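(* Let $R$ be a commutative $\mathbb{Q}$-algebra and let $\varphi\colon \varOmega^U_*\to R$ be a complex genus with exponent $f(x)=x+\ldots\in R[[x]]$. Suppose that (i) $\varphi$ is $T^2$-rigid on the sphere $S^6=G_2/SU(3)$ equipped with its $T^2$-invariant almost complex structure (where $T^2\subset G_2$ is the maximal torus), (ii) $\varphi([S^6])=0$, and (iii) $\varphi$ is $T^5$-rigid on the $10$-dimensional omnioriented quasitoric manifold $\widetilde L(2,3)$ described in the context. Then there exist $\alpha,\delta,\varepsilon\in R$ such that $f(x)=e^{\alpha x}\,\mathrm{sn}(x)$, where $\mathrm{sn}(x)=x+\ldots\in R[[x]]$ is the unique power series satisfying $(\mathrm{sn}'(x))^2=1-2\delta\,\mathrm{sn}^2(x)+\varepsilon\,\mathrm{sn}^4(x)$; that is, $\varphi$ is the Krichever genus with parameter $b_2=0$.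
   Context: A complex genus is a ring homomorphism $\varphi\colon\varOmega^U_*\to R$ from the complex bordism ring. For $R$ a $\mathbb{Q}$-algebra, complex genera correspond bijectively to power series $f(x)=x+\ldots\in R[[x]]$ (the exponent): $\varphi([M])=\langle P_f(TM),[M]\rangle$ where $P_f$ is the multiplicative characteristic class obtained from $\prod_i x_i/f(x_i)$ in terms of Chern roots. Every genus has a universal $T^k$-equivariant extension $\varphi^T\colon\varOmega^{U:T^k}_*\to R[[x_1,\dots,x_k]]$ on bordism of stably complex manifolds with $T^k$-action and invariant stably complex structure, whose constant term is $\varphi([M])$; $\varphi$ is $T^k$-rigid on $M$ if $\varphi^T([M])$ equals its constant term $\varphi([M])$. When the fixed points of $M^{2n}$ are isolated, $\varphi^T([M])=\sum_{p\in M^T}\sigma(p)\prod_{i=1}^n 1/f(\langle w_i(p),x\rangle)$, where $w_1(p),\dots,w_n(p)\in\mathbb{Z}^k$ are the weights of the tangent representation at $p$, $\sigma(p)=\pm1$ is the sign comparing the orientation of $T_pM$ induced by the stably complex structure with that from the complex representation, and $\langle w,x\rangle=\sum_j w_jx_j$. Quasitoric manifold: given a simple $n$-polytope $P\subset\mathbb{R}^n$ with facets $F_1,\dots,F_m$ (inward normals $a_j$) and an integer $n\times m$ matrix $\Lambda$ such that for every vertex $v=F_{j_1}\cap\dots\cap F_{j_n}$ the submatrix $\Lambda_v$ of columns $j_1,\dots,j_n$ has determinant $\pm1$, there is an omnioriented quasitoric $2n$-manifold $M(P,\Lambda)$ with a $T^n$-action and invariant stably complex structure; its fixed points correspond to vertices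 $v$, with weights the rows of $\Lambda_v^{-1}$ and sign $\mathrm{sign}(\det\Lambda_v\cdot\det(a_{j_1},\dots,a_{j_n}))$. $\widetilde L(2,3)=M(P,\Lambda)$ where $P=\Delta^2\times\Delta^3\subset\mathbb{R}^5$ is given by $x_1\ge0,x_2\ge0,x_1+x_2\le1,x_3\ge0,x_4\ge0,x_5\ge0,x_3+x_4+x_5\le1$, with facets ordered so that the inward normals are $a_1=e_1,a_2=e_2,a_3=-e_1-e_2,a_4=e_3,a_5=e_4,a_6=e_5,a_7=-e_3-e_4-e_5$, and $\Lambda=\begin{pmatrix}1&0&1&0&0&0&0\\0&1&-1&0&0&0&0\\0&0&1&1&0&0&1\\0&0&0&0&1&0&-1\\0&0&0&0&0&1&1\end{pmatrix}$. It is an $SU$-manifold (first Chern class zero). *)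

theory Defs
  imports "HOL-Computational_Algebra.Formal_Power_Series"
begin

text \<open>A commutative ring is a Q-algebra (necessarily in a unique way) iff every
  positive integer is invertible in it.\<close>
definition Q_algebra :: "'a::comm_ring_1 itself \<Rightarrow> bool" where
  "Q_algebra _ \<longleftrightarrow> (\<forall>n::nat. n > 0 \<longrightarrow> (\<exists>y::'a. of_nat n * y = 1))"

definition nat_inv :: "nat \<Rightarrow> 'a::comm_ring_1" where
  "nat_inv n = (THE y. of_nat n * y = 1)"

definition rexp :: "'a::comm_ring_1 \<Rightarrow> 'a fps" where
  "rexp \<alpha> = Abs_fps (\<lambda>n. \<alpha> ^ n * nat_inv (fact n))"

text \<open>A k-variate series is a function on exponent vectors m :: nat \<Rightarrow> nat; only
  exponent vectors supported in {..<k} are meaningful.\<close>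
type_synonym 'a mps = "(nat \<Rightarrow> nat) \<Rightarrow> 'a"

definition supp_in :: "nat \<Rightarrow> (nat \<Rightarrow> nat) \<Rightarrow> bool" where
  "supp_in k m \<longleftrightarrow> (\<forall>i\<ge>k. m i = 0)"

definition mdeg :: "nat \<Rightarrow> (nat \<Rightarrow> nat) \<Rightarrow> nat" where
  "mdeg k m = (\<Sum>i<k. m i)"

definition mmult :: "nat \<Rightarrow> 'a::comm_ring_1 mps \<Rightarrow> 'a mps \<Rightarrow> 'a mps" where
  "mmult k a b = (\<lambda>m. \<Sum>n\<in>{n. supp_in k n \<and> (\<forall>i<k. n i \<le> m i)}. a n * b (\<lambda>i. m i - n i))"

definition mconst :: "nat \<Rightarrow> 'a::comm_ring_1 \<Rightarrow> 'a mps" where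
  "mconst k c = (\<lambda>m. if (\<forall>i<k. m i = 0) then c else 0)"

primrec mprodL :: "nat \<Rightarrow> 'a::comm_ring_1 mps list \<Rightarrow> 'a mps" where
  "mprodL k [] = mconst k 1"
| "mprodL k (a # as) = mmult k a (mprodL k as)"

text \<open>Substitution of the linear form <w,x> = sum_j w_j x_j into a univariate series f:
  f(<w,x>) = sum_d f_d <w,x>^d, and the coefficient of x^m in <w,x>^|m| is the multinomial
  coefficient |m|!/prod_j m_j! times prod_j w_j^(m_j).\<close>
definition linsub :: "nat \<Rightarrow> 'a::comm_ring_1 fps \<Rightarrow> (nat \<Rightarrow> int) \<Rightarrow> 'a mps" where
  "linsub k f w = (\<lambda>m. fps_nth f (mdeg k m)
      * of_nat (fact (mdeg k m) div (\<Prod>i<k. fact (m i)))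
      * (\<Prod>i<k. of_int (w i) ^ m i))"

text \<open>Fixed point data of a T^k-manifold with isolated fixed points: a list of
  fixed points p, each given by its sign sigma(p) and the list of its tangent weights
  w_1(p),...,w_n(p) in Z^k (as functions nat \<Rightarrow> int, relevant on {..<k}).\<close>
type_synonym fpdata = "(int \<times> (nat \<Rightarrow> int) list) list"

text \<open>\<open>equiv_genus_eq k f pts c\<close> states the identity
    sum_p sigma(p) prod_i 1/f(<w_i(p),x>) = c
  in (the localisation of) R[[x_1,...,x_k]], written with cleared denominators:
  multiplying by D = prod_q prod_i f(<w_i(q),x>) (a non-zero-divisor) it reads
    sum_p sigma(p) prod_{q \<noteq> p} prod_i f(<w_i(q),x>) = c * D .\<close>
definition fp_den :: "nat \<Rightarrow> 'a::comm_ring_1 fps \<Rightarrow> fpdata \<Rightarrow> nat \<Rightarrow> 'a mps" where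
  "fp_den k f pts j = mprodL k (map (linsub k f) (snd (pts ! j)))"

definition equiv_genus_eq :: "nat \<Rightarrow> 'a::comm_ring_1 fps \<Rightarrow> fpdata \<Rightarrow> 'a \<Rightarrow> bool" where
  "equiv_genus_eq k f pts c \<longleftrightarrow>
     (\<forall>m. supp_in k m \<longrightarrow>
        (\<Sum>j<length pts. of_int (fst (pts ! j))
            * mprodL k (map (fp_den k f pts) (filter (\<lambda>q. q \<noteq> j) [0..<length pts])) m)
        = c * mprodL k (map (fp_den k f pts) [0..<length pts]) m)"

text \<open>Rigidity: the equivariant genus equals its constant term, i.e. it is a constant.
  Its constant term is the non-equivariant genus, so for a rigid genus
  phi([M]) is that constant.\<close>
definition rigid_on :: "nat \<Rightarrow> 'a::comm_ring_1 fps \<Rightarrow> fpdata \<Rightarrow> bool" where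
  "rigid_on k f pts \<longleftrightarrow> (\<exists>c. equiv_genus_eq k f pts c)"

definition wv :: "int list \<Rightarrow> nat \<Rightarrow> int" where
  "wv xs = (\<lambda>i. if i < length xs then xs ! i else 0)"

text \<open>S^6 = G_2/SU(3) with its G_2-invariant almost complex structure and the maximal
  torus T^2 \<subseteq> SU(3) \<subseteq> G_2, parametrised as diag(t_1, t_2, (t_1 t_2)^(-1)).
  Fixed points: the two poles \<plusminus>e; T_e S^6 = C^3 (standard SU(3)-representation),
  T_(-e) S^6 its conjugate. Both signs are +1 (genuine almost complex structure).\<close>
definition S6_data :: fpdata where
  "S6_data = [ (1, [wv [1,0], wv [0,1], wv [-1,-1]]),
               (1, [wv [-1,0], wv [0,-1], wv [1,1]]) ]"

definition Lam :: "nat \<Rightarrow> nat \<Rightarrow> int" where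
  "Lam i j = [[1,0,1,0,0,0,0],[0,1,-1,0,0,0,0],[0,0,1,1,0,0,1],[0,0,0,0,1,0,-1],[0,0,0,0,0,1,1]] ! i ! j"

text \<open>Inward normals a_1..a_7 (0-indexed): normal j, coordinate r.\<close>
definition normal :: "nat \<Rightarrow> nat \<Rightarrow> int" where
  "normal j r = [[1,0,0,0,0],[0,1,0,0,0],[-1,-1,0,0,0],[0,0,1,0,0],[0,0,0,1,0],[0,0,0,0,1],[0,0,-1,-1,-1]] ! j ! r"

text \<open>The 12 vertices of Delta^2 x Delta^3, as lists of the (0-indexed) facets through them
  (ordered increasingly), together with the fixed point data: sign
  sign(det Lambda_v * det(a_(j_1),...,a_(j_5))) and the weights = rows of Lambda_v^(-1)
  (computed by exact rational arithmetic; the weights are certified in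
  lemma \<open>Ltilde_weights_inverse\<close> below).\<close>
definition Ltilde_vertices :: "nat list list" where
  "Ltilde_vertices =
    [[0,1,3,4,5],[0,1,3,4,6],[0,1,3,5,6],[0,1,4,5,6],
     [0,2,3,4,5],[0,2,3,4,6],[0,2,3,5,6],[0,2,4,5,6],
     [1,2,3,4,5],[1,2,3,4,6],[1,2,3,5,6],[1,2,4,5,6]]"

definition Ltilde_weight_rows :: "int list list list" where
  "Ltilde_weight_rows =
    [ [[1,0,0,0,0],[0,1,0,0,0],[0,0,1,0,0],[0,0,0,1,0],[0,0,0,0,1]],
      [[1,0,0,0,0],[0,1,0,0,0],[0,0,1,0,-1],[0,0,0,1,1],[0,0,0,0,1]],
      [[1,0,0,0,0],[0,1,0,0,0],[0,0,1,1,0],[0,0,0,1,1],[0,0,0,-1,0]],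
      [[1,0,0,0,0],[0,1,0,0,0],[0,0,1,1,0],[0,0,-1,0,1],[0,0,1,0,0]],
      [[1,1,0,0,0],[0,-1,0,0,0],[0,1,1,0,0],[0,0,0,1,0],[0,0,0,0,1]],
      [[1,1,0,0,0],[0,-1,0,0,0],[0,1,1,0,-1],[0,0,0,1,1],[0,0,0,0,1]],
      [[1,1,0,0,0],[0,-1,0,0,0],[0,1,1,1,0],[0,0,0,1,1],[0,0,0,-1,0]],
      [[1,1,0,0,0],[0,-1,0,0,0],[0,1,1,1,0],[0,-1,-1,0,1],[0,1,1,0,0]],
      [[1,1,0,0,0],[1,0,0,0,0],[-1,0,1,0,0],[0,0,0,1,0],[0,0,0,0,1]],
      [[1,1,0,0,0],[1,0,0,0,0],[-1,0,1,0,-1],[0,0,0,1,1],[0,0,0,0,1]],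
      [[1,1,0,0,0],[1,0,0,0,0],[-1,0,1,1,0],[0,0,0,1,1],[0,0,0,-1,0]],
      [[1,1,0,0,0],[1,0,0,0,0],[-1,0,1,1,0],[1,0,-1,0,1],[-1,0,1,0,0]] ]"

definition Ltilde_signs :: "int list" where
  "Ltilde_signs = [1,-1,1,-1,1,-1,1,-1,-1,1,-1,1]"

definition Ltilde_data :: fpdata where
  "Ltilde_data = map (\<lambda>(s, ws). (s, map wv ws)) (zip Ltilde_signs Ltilde_weight_rows)"

lemma Ltilde_weights_inverse:
  "\<forall>v<12. \<forall>i<5. \<forall>j<5.
     (\<Sum>r<5. Lam i (Ltilde_vertices ! v ! r) * (Ltilde_weight_rows ! v ! r ! j))
       = (if i = j then 1 else 0)"
proof -
  have all5: "\<And>P. (\<forall>i<(5::nat). P i) \<longleftrightarrow> P 0 \<and> P 1 \<and> P 2 \<and> P 3 \<and> P 4"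
    by (auto simp: less_Suc_eq numeral_eq_Suc)
  have all12: "\<And>P. (\<forall>i<(12::nat). P i) \<longleftrightarrow> (\<forall>i\<in>set [0..<12]. P i)"
    by auto
  show ?thesis
    unfolding all5 all12
    by (simp add: Lam_def Ltilde_vertices_def Ltilde_weight_rows_def upt_rec numeral_eq_Suc)
qed

text \<open>sn(x) = x + ... with sn'(x)^2 = 1 - 2 delta sn(x)^2 + epsilon sn(x)^4
  (such a series is unique over a Q-algebra).\<close>
definition is_sn :: "'a::comm_ring_1 \<Rightarrow> 'a \<Rightarrow> 'a fps \<Rightarrow> bool" where
  "is_sn \<delta> \<epsilon> s \<longleftrightarrow> fps_nth s 0 = 0 \<and> fps_nth s 1 = 1 \<and>
     (fps_deriv s)\<^sup>2 = 1 - fps_const (2 * \<delta>) * s\<^sup>2 + fps_const \<epsilon> * s ^ 4"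

end

theory Submission
  imports Defs
begin

text \<open>
  Substitute for the torus coordinates $u$ times affine functions of a second variable $t$. Each
  rigidity statement becomes an identity of series in $u$ and $t$, and its coefficient of $t^2$
  is a functional equation for the exponent $f$.

  For $S^6$ (weights $\pm x_1, \pm x_2, \mp(x_1 + x_2)$, genus $0$) this is the linear equation
  $f h' - h f' + 2 f_2 f h = 0$ with $h(x) = f(-x)$, which forces $e^{-f_2 x} f$ to be odd.
  Writing $f = e^{\alpha x} x / P$ with $P$ even, the fixed point formula of
  $\widetilde L(2,3)$ becomes
  $P(x)^2\, \Xi(2x)/8 - P(2x) P(x)\, \Xi(3x)/54 - P(2x) P(x)\, \Xi(x)/2 = c\, e^{4 \alpha x} x^5$
  with $\Xi = P^3 - 3 P_2 x^2 P - \tfrac12(\theta - 1)(\theta - 2) P$, $\theta = x\,d/dx$.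
  Since $\Xi = O(x^6)$ and $2^N/4 - 3^N/27 - 1 \neq 0$ for $N \ge 5$, comparing coefficients
  gives $c = 0$ and $\Xi = 0$. Finally, $\Xi = 0$ has the first integral
  $(P - x P')^2 - P^4 + 6 P_2 x^2 P^2 = \varepsilon x^4$, which for $g = x/P$ is
  $g'^2 = 1 - 2\delta g^2 + \varepsilon g^4$ with $\delta = 3 P_2$.
\<close>

unbundle fps_syntax

lemma nat_inv_unique:
  assumes "of_nat n * (y::'a::comm_ring_1) = 1"
  shows "nat_inv n = y"
proof -
  have "z = y" if "of_nat n * z = 1" for z :: 'a
  proof -
    have "z = z * (of_nat n * y)" using assms by simp
    also have "\<dots> = (of_nat n * z) * y" by (simp add: ac_simps)
    finally show ?thesis using that by simp
  qed
  then show ?thesis unfolding nat_inv_def using assms by (rule the_equality[rotated])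
qed

lemma of_nat_mult_nat_inv:
  assumes "Q_algebra TYPE('a::comm_ring_1)" "n > 0"
  shows "of_nat n * (nat_inv n :: 'a) = 1"
proof -
  obtain y :: 'a where "of_nat n * y = 1" using assms unfolding Q_algebra_def by blast
  then show ?thesis using nat_inv_unique by metis
qed

lemma Q_algebra_of_nat_mult_eq_0:
  assumes "Q_algebra TYPE('a::comm_ring_1)" "n > 0" "of_nat n * (x::'a) = 0"
  shows "x = 0"
proof -
  have "x = (nat_inv n * of_nat n) * x" using of_nat_mult_nat_inv[OF assms(1,2)] by (simp add: mult.commute)
  also have "\<dots> = 0" using assms(3) by (simp add: mult.assoc)
  finally show ?thesis .
qed

lemma nat_inv_mult:
  assumes "Q_algebra TYPE('a::comm_ring_1)" "a > 0" "b > 0"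
  shows "(nat_inv a :: 'a) * nat_inv b = nat_inv (a * b)"
proof -
  have "of_nat (a * b) * ((nat_inv a :: 'a) * nat_inv b) = (of_nat a * nat_inv a) * (of_nat b * nat_inv b)"
    by (simp add: ac_simps)
  also have "\<dots> = 1" using of_nat_mult_nat_inv[OF assms(1,2)] of_nat_mult_nat_inv[OF assms(1,3)] by simp
  finally show ?thesis using nat_inv_unique by metis
qed

lemma nat_inv_fact_mult:
  assumes "Q_algebra TYPE('a::comm_ring_1)" "i \<le> N"
  shows "(nat_inv (fact i) :: 'a) * nat_inv (fact (N - i)) = of_nat (N choose i) * nat_inv (fact N)"
proof -
  have e: "fact N = fact i * fact (N - i) * (N choose i)" using binomial_fact_lemma[OF assms(2)] by simp
  have "of_nat (fact i * fact (N - i)) * (of_nat (N choose i) * (nat_inv (fact N) :: 'a))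
      = of_nat (fact N) * nat_inv (fact N)"
    by (simp add: e ac_simps)
  also have "\<dots> = 1" by (rule of_nat_mult_nat_inv[OF assms(1)]) simp
  finally have "nat_inv (fact i * fact (N - i)) = (of_nat (N choose i) * (nat_inv (fact N) :: 'a))"
    using nat_inv_unique by metis
  then show ?thesis using nat_inv_mult[OF assms(1), of "fact i" "fact (N - i)"] by simp
qed

lemma Q_algebra_fps: "Q_algebra TYPE('a::comm_ring_1) \<Longrightarrow> Q_algebra TYPE('a fps)"
  unfolding Q_algebra_def by (metis fps_const_mult fps_const_1_eq_1 fps_of_nat)

lemma nat_inv_fps:
  assumes "Q_algebra TYPE('a::comm_ring_1)" "n > 0"
  shows "(nat_inv n :: 'a fps) = fps_const (nat_inv n)"
  by (rule nat_inv_unique) (simp add: fps_of_nat[symmetric] of_nat_mult_nat_inv[OF assms] del: fps_of_nat)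

definition int_inv :: "int \<Rightarrow> 'a::comm_ring_1" where
  "int_inv k = (if k = 0 then 0 else if k > 0 then nat_inv (nat k) else - nat_inv (nat (- k)))"

lemma of_int_mult_int_inv:
  assumes Q: "Q_algebra TYPE('a::comm_ring_1)" and k: "k \<noteq> 0"
  shows "of_int k * (int_inv k :: 'a) = 1"
proof (cases "k > 0")
  case True
  then have "of_int k = (of_nat (nat k) :: 'a)" by simp
  then show ?thesis using True k of_nat_mult_nat_inv[OF Q, of "nat k"] by (simp add: int_inv_def)
next
  case False
  then have "of_int k = - (of_nat (nat (- k)) :: 'a)" by simp
  then show ?thesis using False k of_nat_mult_nat_inv[OF Q, of "nat (-k)"] by (simp add: int_inv_def)
qed

lemma Q_algebra_of_int_mult_eq_0:
  assumes "Q_algebra TYPE('a::comm_ring_1)" "k \<noteq> 0" "of_int k * (x::'a) = 0"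
  shows "x = 0"
proof -
  have "x = (int_inv k * of_int k) * x" using of_int_mult_int_inv[OF assms(1,2)] by (simp add: mult.commute)
  also have "\<dots> = 0" using assms(3) by (simp add: mult.assoc)
  finally show ?thesis .
qed

lemma int_inv_1: "Q_algebra TYPE('a::comm_ring_1) \<Longrightarrow> (int_inv 1 :: 'a) = 1"
  using of_int_mult_int_inv[of 1] by simp

lemma int_inv_uminus: "(int_inv (- k) :: 'a::comm_ring_1) = - int_inv k"
  by (simp add: int_inv_def)

lemma rexp_nth: "rexp a $ N = a ^ N * nat_inv (fact N)"
  by (simp add: rexp_def)

lemma rexp_nth_0: "Q_algebra TYPE('a::comm_ring_1) \<Longrightarrow> rexp (a::'a) $ 0 = 1"
  using of_nat_mult_nat_inv[of 1] by (simp add: rexp_nth)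

lemma rexp_add:
  assumes "Q_algebra TYPE('a::comm_ring_1)"
  shows "rexp (a::'a) * rexp b = rexp (a + b)"
proof (rule fps_ext)
  fix N
  have "(rexp a * rexp b) $ N
      = (\<Sum>i=0..N. a ^ i * b ^ (N - i) * ((nat_inv (fact i) :: 'a) * nat_inv (fact (N - i))))"
    by (simp add: fps_mult_nth rexp_nth ac_simps)
  also have "\<dots> = (\<Sum>i\<le>N. of_nat (N choose i) * a ^ i * b ^ (N - i)) * nat_inv (fact N)"
    unfolding sum_distrib_right atLeast0AtMost
    by (intro sum.cong refl) (simp add: nat_inv_fact_mult[OF assms] ac_simps)
  also have "\<dots> = rexp (a + b) $ N" by (simp only: rexp_nth binomial_ring)
  finally show "(rexp a * rexp b) $ N = rexp (a + b) $ N" .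
qed

lemma rexp_0:
  assumes "Q_algebra TYPE('a::comm_ring_1)"
  shows "rexp (0::'a) = 1"
proof (rule fps_ext)
  fix N show "rexp (0::'a) $ N = 1 $ N"
    using of_nat_mult_nat_inv[OF assms, of 1] by (cases N) (simp_all add: rexp_nth)
qed

lemma rexp_mult_rexp_uminus:
  assumes "Q_algebra TYPE('a::comm_ring_1)"
  shows "rexp (a::'a) * rexp (- a) = 1"
  using rexp_add[OF assms, of a "-a"] rexp_0[OF assms] by simp

lemma fps_deriv_rexp:
  assumes "Q_algebra TYPE('a::comm_ring_1)"
  shows "fps_deriv (rexp (a::'a)) = fps_const a * rexp a"
proof (rule fps_ext)
  fix N
  have "(of_nat (fact (Suc N)) :: 'a) = of_nat (Suc N) * of_nat (fact N)"
    by (metis fact_Suc of_nat_mult of_nat_id)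
  then have "of_nat (fact N) * ((nat_inv (fact (Suc N)) :: 'a) * of_nat (Suc N))
      = of_nat (fact (Suc N)) * nat_inv (fact (Suc N))"
    by (simp only: ac_simps)
  also have "\<dots> = 1" by (rule of_nat_mult_nat_inv[OF assms]) simp
  finally have "(nat_inv (fact (Suc N)) :: 'a) * of_nat (Suc N) = nat_inv (fact N)"
    using nat_inv_unique by metis
  then show "fps_deriv (rexp a) $ N = (fps_const a * rexp a) $ N"
    by (simp add: rexp_nth ac_simps)
qed

definition fps_scale :: "int \<Rightarrow> 'a::comm_ring_1 fps \<Rightarrow> 'a fps" where
  "fps_scale k a = Abs_fps (\<lambda>N. of_int k ^ N * a $ N)"

lemma fps_scale_mult: "fps_scale k (a * b) = fps_scale k a * fps_scale k b"
proof (rule fps_ext)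
  fix N
  show "fps_scale k (a * b) $ N = (fps_scale k a * fps_scale k b) $ N"
    unfolding fps_scale_def fps_mult_nth by (simp add: sum_distrib_left ac_simps power_add[symmetric])
qed

lemma fps_scale_diff: "fps_scale k (a - b) = fps_scale k a - fps_scale k b"
  by (simp add: fps_scale_def fps_eq_iff algebra_simps)

lemma fps_scale_const: "fps_scale k (fps_const c) = fps_const c"
  by (simp add: fps_scale_def fps_eq_iff)

lemma fps_scale_one: "fps_scale k 1 = 1"
  by (simp add: fps_scale_def fps_eq_iff)

lemma fps_scale_X: "fps_scale k fps_X = fps_const (of_int k) * fps_X"
  by (rule fps_ext) (simp add: fps_scale_def fps_X_def)

lemma fps_scale_by_1: "fps_scale 1 a = a"
  by (simp add: fps_scale_def fps_eq_iff)

lemma fps_scale_rexp: "fps_scale k (rexp a) = rexp (of_int k * a)"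
  by (simp add: fps_scale_def fps_eq_iff rexp_nth power_mult_distrib)

lemma fps_scale_power: "fps_scale k (a ^ n) = fps_scale k a ^ n"
  by (induction n) (simp_all add: fps_scale_one fps_scale_mult)

lemma fps_scale_scale: "fps_scale k (fps_scale l a) = fps_scale (k * l) a"
  by (simp add: fps_scale_def fps_eq_iff power_mult_distrib)

lemma fps_scale_uminus_even: "fps_scale (-1) P = P \<Longrightarrow> fps_scale (- k) P = fps_scale k P"
  by (metis mult_minus1 fps_scale_scale mult.commute)

lemma even_fps_nth_odd:
  assumes "Q_algebra TYPE('a::comm_ring_1)" "fps_scale (-1) P = (P :: 'a fps)" "odd n"
  shows "P $ n = 0"
proof (rule Q_algebra_of_nat_mult_eq_0[OF assms(1)])
  have "fps_scale (-1) P $ n = P $ n" using assms(2) by simp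
  then show "of_nat 2 * P $ n = 0" using assms(3) by (simp add: fps_scale_def)
qed simp

lemma fps_X_power_mult_cancel: "(fps_X :: 'a::comm_ring_1 fps) ^ k * A = 0 \<Longrightarrow> A = 0"
proof (rule fps_ext)
  fix n assume "fps_X ^ k * A = 0"
  then have "(fps_X ^ k * A) $ (n + k) = 0" by simp
  then show "A $ n = 0 $ n" by (simp add: fps_X_power_mult_nth)
qed

lemma const_X_power_mult_cancel: "fps_const (fps_X :: 'a::comm_ring_1 fps) ^ k * A = 0 \<Longrightarrow> A = 0"
proof (rule fps_ext)
  fix n assume "fps_const (fps_X :: 'a fps) ^ k * A = 0"
  then have "fps_X ^ k * A $ n = 0" by (metis fps_const_power fps_mult_left_const_nth fps_zero_nth)
  then show "A $ n = 0 $ n" using fps_X_power_mult_cancel by simp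
qed

lemma fps_mult_nth_eq_0: "(\<And>j. j \<le> n \<Longrightarrow> B $ j = 0) \<Longrightarrow> (A * B :: 'a::comm_ring_1 fps) $ n = 0"
  by (simp add: fps_mult_nth)

lemma fps_mult_nth_eq_head:
  fixes A B :: "'a::comm_ring_1 fps"
  assumes "\<And>i. 0 < i \<Longrightarrow> i \<le> N \<Longrightarrow> B $ (N - i) = 0"
  shows "(A * B) $ N = A $ 0 * B $ N"
proof -
  have "(A * B) $ N = A $ 0 * B $ (N - 0) + (\<Sum>i=Suc 0..N. A $ i * B $ (N - i))"
    by (simp add: fps_mult_nth sum.atLeast_Suc_atMost)
  also have "(\<Sum>i=Suc 0..N. A $ i * B $ (N - i)) = 0" using assms by (intro sum.neutral) auto
  finally show ?thesis by simp
qed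

definition monomials_deg :: "nat \<Rightarrow> nat \<Rightarrow> (nat \<Rightarrow> nat) set" where
  "monomials_deg k N = {m. supp_in k m \<and> mdeg k m = N}"

definition monomials_le :: "nat \<Rightarrow> nat \<Rightarrow> (nat \<Rightarrow> nat) set" where
  "monomials_le k N = {m. supp_in k m \<and> (\<forall>i<k. m i \<le> N)}"

lemma finite_monomials_le: "finite (monomials_le k N)"
proof (induction k)
  case 0
  have "monomials_le 0 N = {\<lambda>_. 0}" by (auto simp: monomials_le_def supp_in_def)
  then show ?case by simp
next
  case (Suc k)
  have "monomials_le (Suc k) N \<subseteq> (\<lambda>(j,m). m(k:=j)) ` ({..N} \<times> monomials_le k N)"
  proof
    fix m assume m: "m \<in> monomials_le (Suc k) N"
    then have "m(k:=0) \<in> monomials_le k N" "m k \<le> N"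
      by (auto simp: monomials_le_def supp_in_def)
    moreover have "m = (m(k:=0))(k := m k)" by simp
    ultimately show "m \<in> (\<lambda>(j,m). m(k:=j)) ` ({..N} \<times> monomials_le k N)"
      by (metis (no_types, lifting) SigmaI atMost_iff case_prod_conv image_eqI)
  qed
  then show ?case using Suc by (meson finite_SigmaI finite_atMost finite_imageI finite_subset)
qed

lemma finite_monomials_deg: "finite (monomials_deg k N)"
proof (rule finite_subset[OF _ finite_monomials_le])
  show "monomials_deg k N \<subseteq> monomials_le k N"
    by (auto simp: monomials_deg_def monomials_le_def mdeg_def intro: member_le_sum)
qed

lemma finite_monomials_below: "finite {n. supp_in k n \<and> (\<forall>i<k. n i \<le> m i)}"
proof (rule finite_subset[OF _ finite_monomials_le])
  show "{n. supp_in k n \<and> (\<forall>i<k. n i \<le> m i)} \<subseteq> monomials_le k (\<Sum>i<k. m i)"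
    by (auto simp: monomials_le_def intro: order_trans[OF _ member_le_sum])
qed

lemma monomials_deg_0: "monomials_deg 0 N = (if N = 0 then {\<lambda>_. 0} else {})"
  by (auto simp: monomials_deg_def supp_in_def mdeg_def)

lemma monomials_deg_at_0: "monomials_deg k 0 = {\<lambda>_. 0}"
  by (auto simp: monomials_deg_def supp_in_def mdeg_def fun_eq_iff) (metis not_le lessThan_iff)

lemma sum_monomials_deg_Suc:
  "(\<Sum>m\<in>monomials_deg (Suc k) N. h m) = (\<Sum>j\<le>N. \<Sum>m\<in>monomials_deg k (N - j). h (m(k := j)))"
proof -
  have "(\<Sum>j\<le>N. \<Sum>m\<in>monomials_deg k (N - j). h (m(k := j)))
      = (\<Sum>(j, m)\<in>(SIGMA j:{..N}. monomials_deg k (N - j)). h (m(k := j)))"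
    by (rule sum.Sigma) (simp_all add: finite_monomials_deg)
  also have "\<dots> = (\<Sum>m\<in>monomials_deg (Suc k) N. h m)"
  proof (rule sum.reindex_bij_witness[where j = "\<lambda>(j, m). m(k := j)" and i = "\<lambda>m. (m k, m(k := 0))"])
    fix jm assume "jm \<in> (SIGMA j:{..N}. monomials_deg k (N - j))"
    then obtain j m where jm: "jm = (j, m)" "j \<le> N" "supp_in k m" "(\<Sum>i<k. m i) = N - j"
      by (auto simp: monomials_deg_def mdeg_def)
    have "(\<Sum>i<k. (m(k := j)) i) = (\<Sum>i<k. m i)" by (intro sum.cong) auto
    then show "(case jm of (j, m) \<Rightarrow> m(k := j)) \<in> monomials_deg (Suc k) N"
      using jm by (auto simp: monomials_deg_def mdeg_def supp_in_def)
    show "(case case jm of (j, m) \<Rightarrow> m(k := j) of m \<Rightarrow> (m k, m(k := 0))) = jm"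
      using jm by (simp add: supp_in_def fun_upd_idem)
  next
    fix m assume "m \<in> monomials_deg (Suc k) N"
    then have "supp_in (Suc k) m" "(\<Sum>i<k. m i) + m k = N" by (auto simp: monomials_deg_def mdeg_def)
    moreover have "(\<Sum>i<k. (m(k := 0)) i) = (\<Sum>i<k. m i)" by (intro sum.cong) auto
    ultimately show "(m k, m(k := 0)) \<in> (SIGMA j:{..N}. monomials_deg k (N - j))"
      by (auto simp: monomials_deg_def mdeg_def supp_in_def)
  qed (auto simp: split_beta)
  finally show ?thesis ..
qed

lemma sum_monomials_deg_convolution:
  "(\<Sum>p\<in>monomials_deg k N. \<Sum>n\<in>{n. supp_in k n \<and> (\<forall>i<k. n i \<le> p i)}. g n (\<lambda>i. p i - n i))
     = (\<Sum>i\<le>N. \<Sum>m\<in>monomials_deg k i. \<Sum>n\<in>monomials_deg k (N - i). g m n)"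
proof -
  define D where "D p = {n. supp_in k n \<and> (\<forall>i<k. n i \<le> p i)}" for p
  have "(\<Sum>p\<in>monomials_deg k N. \<Sum>n\<in>D p. g n (\<lambda>i. p i - n i))
      = (\<Sum>(p, n)\<in>(SIGMA p:monomials_deg k N. D p). g n (\<lambda>i. p i - n i))"
    unfolding D_def by (rule sum.Sigma) (simp_all add: finite_monomials_deg finite_monomials_below)
  also have "\<dots> = (\<Sum>(i, m, n)\<in>(SIGMA i:{..N}. monomials_deg k i \<times> monomials_deg k (N - i)). g m n)"
  proof (rule sum.reindex_bij_witness[where i = "\<lambda>(i, m, n). (\<lambda>j. m j + n j, m)"
        and j = "\<lambda>(p, n). (mdeg k n, n, \<lambda>i. p i - n i)"])
    fix pn assume "pn \<in> (SIGMA p:monomials_deg k N. D p)"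
    then obtain p n where pn: "pn = (p, n)" "supp_in k p" "mdeg k p = N" "supp_in k n" "\<forall>i<k. n i \<le> p i"
      by (auto simp: monomials_deg_def D_def)
    have "n i + (p i - n i) = p i" for i
      using pn by (cases "i < k") (auto simp: supp_in_def)
    then show "(case case pn of (p, n) \<Rightarrow> (mdeg k n, n, \<lambda>i. p i - n i) of (i, m, n) \<Rightarrow> (\<lambda>j. m j + n j, m)) = pn"
      using pn by simp
    have "mdeg k n \<le> N" using pn unfolding mdeg_def by (metis sum_mono lessThan_iff)
    moreover have "mdeg k (\<lambda>i. p i - n i) = N - mdeg k n"
      using pn unfolding mdeg_def by (subst sum_subtractf_nat) auto
    ultimately show "(case pn of (p, n) \<Rightarrow> (mdeg k n, n, \<lambda>i. p i - n i))
        \<in> (SIGMA i:{..N}. monomials_deg k i \<times> monomials_deg k (N - i))"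
      using pn by (auto simp: monomials_deg_def supp_in_def)
  next
    fix imn assume "imn \<in> (SIGMA i:{..N}. monomials_deg k i \<times> monomials_deg k (N - i))"
    then obtain i m n where imn: "imn = (i, m, n)" "i \<le> N" "supp_in k m" "mdeg k m = i"
        "supp_in k n" "mdeg k n = N - i"
      by (auto simp: monomials_deg_def)
    then show "(case case imn of (i, m, n) \<Rightarrow> (\<lambda>j. m j + n j, m) of (p, n) \<Rightarrow> (mdeg k n, n, \<lambda>i. p i - n i)) = imn"
      by simp
    have "mdeg k (\<lambda>j. m j + n j) = N" using imn by (simp add: mdeg_def sum.distrib)
    then show "(case imn of (i, m, n) \<Rightarrow> (\<lambda>j. m j + n j, m)) \<in> (SIGMA p:monomials_deg k N. D p)"
      using imn by (auto simp: monomials_deg_def D_def supp_in_def)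
  qed auto
  also have "\<dots> = (\<Sum>i\<le>N. \<Sum>m\<in>monomials_deg k i. \<Sum>n\<in>monomials_deg k (N - i). g m n)"
    by (subst sum.Sigma[symmetric]) (simp_all add: finite_monomials_deg sum.cartesian_product)
  finally show ?thesis unfolding D_def .
qed

lemma prod_fact_dvd_fact_sum:
  fixes m :: "nat \<Rightarrow> nat"
  shows "(\<Prod>i<k. fact (m i)) dvd (fact (\<Sum>i<k. m i) :: nat)"
proof (induction k)
  case (Suc k)
  have "(\<Prod>i<Suc k. fact (m i)) = (\<Prod>i<k. fact (m i)) * (fact (m k) :: nat)" by simp
  also have "\<dots> dvd fact (\<Sum>i<k. m i) * fact (m k)" using Suc by (simp add: mult_dvd_mono)
  also have "\<dots> dvd fact ((\<Sum>i<k. m i) + m k)" by (rule fact_fact_dvd_fact)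
  finally show ?case by simp
qed simp

lemma fact_div_mult_fact:
  fixes D :: nat
  assumes "j \<le> N" "D dvd fact (N - j)"
  shows "fact N div (D * fact j) = (N choose j) * (fact (N - j) div D)"
proof -
  obtain q where q: "fact (N - j) = D * q" using assms(2) by blast
  have D0: "D > 0" using q by (metis fact_nonzero mult_is_0 neq0_conv)
  have "fact N = fact j * fact (N - j) * (N choose j)" using binomial_fact_lemma[OF assms(1)] by simp
  also have "\<dots> = (D * fact j) * (q * (N choose j))" using q by (simp add: ac_simps)
  finally have "fact N div (D * fact j) = q * (N choose j)" using D0 by simp
  moreover have "fact (N - j) div D = q" using q D0 by simp
  ultimately show ?thesis by simp
qed

lemma multinomial_formula:
  fixes c :: "nat \<Rightarrow> 'a::comm_ring_1"
  shows "(\<Sum>i<k. c i) ^ N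
    = (\<Sum>m\<in>monomials_deg k N. of_nat (fact N div (\<Prod>i<k. fact (m i))) * (\<Prod>i<k. c i ^ m i))"
proof (induction k arbitrary: N)
  case 0
  then show ?case by (cases N) (auto simp: monomials_deg_0)
next
  case (Suc k)
  define summand where "summand n m = of_nat (fact n div (\<Prod>i<k. fact (m i))) * (\<Prod>i<k. c i ^ m i)"
    for n and m :: "nat \<Rightarrow> nat"
  have step: "of_nat (N choose j) * c k ^ j * summand (N - j) m
      = of_nat (fact N div (\<Prod>i<Suc k. fact ((m(k := j)) i))) * (\<Prod>i<Suc k. c i ^ (m(k := j)) i)"
    if "j \<le> N" "m \<in> monomials_deg k (N - j)" for j m
  proof -
    have dvd: "(\<Prod>i<k. fact (m i)) dvd (fact (N - j) :: nat)"
      using that prod_fact_dvd_fact_sum[of m k] by (simp add: monomials_deg_def mdeg_def)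
    have "fact N div (\<Prod>i<Suc k. fact ((m(k := j)) i)) = (N choose j) * (fact (N - j) div (\<Prod>i<k. fact (m i)))"
      using fact_div_mult_fact[OF that(1) dvd] by (simp add: ac_simps)
    moreover have "(\<Prod>i<k. c i ^ (m(k := j)) i) = (\<Prod>i<k. c i ^ m i)" by (intro prod.cong) auto
    ultimately show ?thesis by (simp add: summand_def ac_simps)
  qed
  have "(\<Sum>i<Suc k. c i) ^ N = (c k + (\<Sum>i<k. c i)) ^ N" by (simp add: add.commute)
  also have "\<dots> = (\<Sum>j\<le>N. of_nat (N choose j) * c k ^ j * (\<Sum>i<k. c i) ^ (N - j))"
    by (rule binomial_ring)
  also have "\<dots> = (\<Sum>j\<le>N. \<Sum>m\<in>monomials_deg k (N - j). of_nat (N choose j) * c k ^ j * summand (N - j) m)"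
    by (simp add: Suc summand_def sum_distrib_left)
  also have "\<dots> = (\<Sum>j\<le>N. \<Sum>m\<in>monomials_deg k (N - j).
      of_nat (fact N div (\<Prod>i<Suc k. fact ((m(k := j)) i))) * (\<Prod>i<Suc k. c i ^ (m(k := j)) i))"
    by (intro sum.cong refl step) auto
  also have "\<dots> = (\<Sum>m\<in>monomials_deg (Suc k) N.
      of_nat (fact N div (\<Prod>i<Suc k. fact (m i))) * (\<Prod>i<Suc k. c i ^ m i))"
    by (rule sum_monomials_deg_Suc[symmetric])
  finally show ?case .
qed

section \<open>Series in two variables\<close>

text \<open>An element of \<open>'a fps fps\<close> is read as a series in an outer variable $u$ whose
  coefficients are series in an inner variable $t$. Then \<open>dilate L a\<close> is $a(L u)$,
  \<open>aff a b\<close> is $a + b t$, and \<open>tcoeff j A\<close> is the coefficient of $t^j$ in $A$,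
  a series in $u$.\<close>

definition dilate :: "'a::comm_ring_1 fps \<Rightarrow> 'a fps \<Rightarrow> 'a fps fps" where
  "dilate L a = Abs_fps (\<lambda>N. fps_const (a $ N) * L ^ N)"

definition aff :: "int \<Rightarrow> int \<Rightarrow> 'a::comm_ring_1 fps" where
  "aff a b = fps_const (of_int a) + fps_const (of_int b) * fps_X"

definition tcoeff :: "nat \<Rightarrow> 'a::comm_ring_1 fps fps \<Rightarrow> 'a fps" where
  "tcoeff j A = Abs_fps (\<lambda>N. A $ N $ j)"

lemma fps_const_sum: "fps_const (sum f A) = (\<Sum>x\<in>A. fps_const (f x))"
  by (induction A rule: infinite_finite_induct) (auto simp del: fps_const_add simp: fps_const_add[symmetric])

lemma fps_const_prod: "fps_const (prod f A) = (\<Prod>x\<in>A. fps_const (f x))"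
  by (induction A rule: infinite_finite_induct) (auto simp del: fps_const_mult simp: fps_const_mult[symmetric])

lemma dilate_nth: "dilate L a $ N = fps_const (a $ N) * L ^ N"
  by (simp add: dilate_def)

lemma dilate_mult: "dilate L (a * b) = dilate L a * dilate L b"
proof (rule fps_ext)
  fix N
  have "dilate L (a * b) $ N = (\<Sum>i=0..N. fps_const (a $ i) * L ^ i * (fps_const (b $ (N - i)) * L ^ (N - i)))"
    unfolding dilate_nth fps_mult_nth fps_const_sum sum_distrib_right
  proof (intro sum.cong refl)
    fix x assume "x \<in> {0..N}"
    then have "L ^ N = L ^ x * L ^ (N - x)" by (simp flip: power_add)
    then show "fps_const (a $ x * b $ (N - x)) * L ^ N
        = fps_const (a $ x) * L ^ x * (fps_const (b $ (N - x)) * L ^ (N - x))"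
      by (simp add: ac_simps)
  qed
  then show "dilate L (a * b) $ N = (dilate L a * dilate L b) $ N" by (simp add: fps_mult_nth dilate_nth)
qed

lemma dilate_one: "dilate L 1 = 1"
  by (simp add: fps_eq_iff dilate_nth)

lemma dilate_X: "dilate L fps_X = fps_const L * fps_X"
  by (rule fps_ext) (simp add: dilate_nth fps_X_def)

lemma dilate_rexp:
  assumes "Q_algebra TYPE('a::comm_ring_1)"
  shows "dilate L (rexp (a::'a)) = rexp (fps_const a * L)"
  by (rule fps_ext) (simp add: dilate_nth rexp_nth nat_inv_fps[OF assms] power_mult_distrib ac_simps)

lemma sum_of_int_mult_aff:
  "(\<Sum>i\<in>A. of_int (w i) * aff (p i) (q i)) = (aff (\<Sum>i\<in>A. w i * p i) (\<Sum>i\<in>A. w i * q i) :: 'a::comm_ring_1 fps)"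
proof -
  have "(\<Sum>i\<in>A. of_int (w i) * aff (p i) (q i))
      = (\<Sum>i\<in>A. fps_const (of_int (w i * p i)) + fps_const (of_int (w i * q i)) * (fps_X :: 'a fps))"
    by (intro sum.cong refl) (simp add: aff_def fps_of_int[symmetric] algebra_simps del: fps_of_int)
  also have "\<dots> = fps_const (\<Sum>i\<in>A. of_int (w i * p i)) + fps_const (\<Sum>i\<in>A. of_int (w i * q i)) * fps_X"
    by (simp add: sum.distrib fps_const_sum sum_distrib_right del: fps_const_add fps_const_mult of_int_mult)
  finally show ?thesis by (simp add: aff_def del: of_int_mult)
qed

lemma aff_add: "(aff a b :: 'a::comm_ring_1 fps) + aff c d = aff (a + c) (b + d)"
  by (simp add: aff_def algebra_simps fps_const_add[symmetric] del: fps_const_add)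

lemma aff_power_nth:
  "((aff a b :: 'a::comm_ring_1 fps) ^ N) $ j = of_nat (N choose j) * of_int a ^ (N - j) * of_int b ^ j"
proof -
  have "(aff a b :: 'a fps) ^ N = (fps_const (of_int b) * fps_X + fps_const (of_int a)) ^ N"
    by (simp add: aff_def add.commute)
  also have "\<dots> = (\<Sum>i\<le>N. of_nat (N choose i) * (fps_const (of_int b) * fps_X) ^ i * fps_const (of_int a) ^ (N - i))"
    by (rule binomial_ring)
  also have "\<dots> $ j = (\<Sum>i\<le>N. if i = j then of_nat (N choose j) * (of_int b ^ j * of_int a ^ (N - j)) else 0)"
    unfolding fps_sum_nth
    by (intro sum.cong refl) (simp add: power_mult_distrib fps_X_power_mult_right_nth fps_of_nat[symmetric] del: fps_of_nat)
  also have "\<dots> = of_nat (N choose j) * of_int a ^ (N - j) * of_int b ^ j"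
    by (cases "j \<le> N") (simp_all add: binomial_eq_0 ac_simps)
  finally show ?thesis .
qed

lemma dilate_aff_rexp_mult:
  assumes "Q_algebra TYPE('a::comm_ring_1)"
  shows "dilate (aff a b) (rexp (\<alpha>::'a)) * dilate (aff c d) (rexp \<alpha>) = dilate (aff (a + c) (b + d)) (rexp \<alpha>)"
  unfolding dilate_rexp[OF assms] rexp_add[OF Q_algebra_fps[OF assms]] aff_add[symmetric]
  by (simp add: distrib_left)

lemma dilate_aff_0_rexp:
  assumes "Q_algebra TYPE('a::comm_ring_1)"
  shows "dilate (aff 0 0) (rexp (\<alpha>::'a)) = 1"
  unfolding dilate_rexp[OF assms] using rexp_0[OF Q_algebra_fps[OF assms]] by (simp add: aff_def)

lemma tcoeff_nth: "tcoeff j A $ N = A $ N $ j"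
  by (simp add: tcoeff_def)

lemma tcoeff_add: "tcoeff j (A + B) = tcoeff j A + tcoeff j B"
  by (simp add: tcoeff_def fps_eq_iff)

lemma tcoeff_zero: "tcoeff j 0 = 0"
  by (simp add: tcoeff_def fps_eq_iff)

lemma tcoeff_of_int_mult: "tcoeff j (of_int z * A) = of_int z * tcoeff j A"
  by (simp add: tcoeff_def fps_eq_iff fps_of_int[symmetric] del: fps_of_int)

lemma tcoeff_const_mult: "tcoeff j (fps_const (fps_const c) * A) = fps_const c * tcoeff j A"
  by (simp add: tcoeff_def fps_eq_iff)

lemma tcoeff_sum: "tcoeff j (sum A I) = (\<Sum>i\<in>I. tcoeff j (A i))"
  by (simp add: tcoeff_def fps_eq_iff fps_sum_nth)

lemma tcoeff_mult: "tcoeff j (A * B) = (\<Sum>i\<le>j. tcoeff i A * tcoeff (j - i) B)"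
proof (rule fps_ext)
  fix N
  have "tcoeff j (A * B) $ N = (\<Sum>a=0..N. \<Sum>i=0..j. A $ a $ i * B $ (N - a) $ (j - i))"
    by (simp add: tcoeff_nth fps_mult_nth fps_sum_nth)
  also have "\<dots> = (\<Sum>i=0..j. \<Sum>a=0..N. A $ a $ i * B $ (N - a) $ (j - i))"
    by (rule sum.swap)
  also have "\<dots> = (\<Sum>i\<le>j. tcoeff i A * tcoeff (j - i) B) $ N"
    by (simp add: fps_sum_nth fps_mult_nth tcoeff_nth atLeast0AtMost)
  finally show "tcoeff j (A * B) $ N = (\<Sum>i\<le>j. tcoeff i A * tcoeff (j - i) B) $ N" .
qed

lemma tcoeff_0_mult: "tcoeff 0 (A * B) = tcoeff 0 A * tcoeff 0 B"
  by (simp add: tcoeff_mult)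

lemma tcoeff_1_mult: "tcoeff (Suc 0) (A * B) = tcoeff 0 A * tcoeff (Suc 0) B + tcoeff (Suc 0) A * tcoeff 0 B"
  by (simp add: tcoeff_mult atMost_Suc)

lemma tcoeff_2_mult: "tcoeff 2 (A * B) = tcoeff 0 A * tcoeff 2 B + tcoeff 1 A * tcoeff 1 B + tcoeff 2 A * tcoeff 0 B"
  by (simp add: tcoeff_mult numeral_eq_Suc atMost_Suc)

lemma tcoeff_mult_const_left:
  assumes "\<And>j. tcoeff (Suc j) A = 0"
  shows "tcoeff n (A * B) = tcoeff 0 A * tcoeff n B"
proof -
  have "tcoeff n (A * B) = (\<Sum>i\<le>n. tcoeff i A * tcoeff (n - i) B)" by (rule tcoeff_mult)
  also have "\<dots> = (\<Sum>i\<in>{0}. tcoeff i A * tcoeff (n - i) B)"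
    using assms by (intro sum.mono_neutral_right) (auto, metis not0_implies_Suc mult_zero_left)
  finally show ?thesis by simp
qed

lemma tcoeff_shift: "tcoeff (j + k) (fps_const (fps_X :: 'a::comm_ring_1 fps) ^ k * A) = tcoeff j A"
  by (rule fps_ext) (simp add: tcoeff_nth fps_X_power_mult_nth)

lemma tcoeff_0_X_power: "tcoeff 0 ((fps_X :: 'a::comm_ring_1 fps fps) ^ k) = fps_X ^ k"
  by (rule fps_ext) (simp add: tcoeff_nth)

lemma tcoeff_dilate_aff:
  "tcoeff j (dilate (aff a b) f) = Abs_fps (\<lambda>N. f $ N * (of_nat (N choose j) * of_int a ^ (N - j) * of_int b ^ j))"
  by (simp add: tcoeff_def dilate_nth aff_power_nth)

lemma tcoeff_0_dilate_aff: "tcoeff 0 (dilate (aff a b) f) = fps_scale a f"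
  by (simp add: tcoeff_dilate_aff fps_scale_def fps_eq_iff mult.commute)

lemma tcoeff_dilate_aff_t: "tcoeff j (dilate (aff 0 b) f) = fps_const (of_int b ^ j * f $ j) * fps_X ^ j"
proof (rule fps_ext)
  fix N show "tcoeff j (dilate (aff 0 b) f) $ N = (fps_const (of_int b ^ j * f $ j) * fps_X ^ j) $ N"
    by (cases "N < j") (auto simp: tcoeff_dilate_aff fps_X_power_mult_right_nth binomial_eq_0 power_0_left)
qed

lemma tcoeff_1_dilate_unit_aff:
  assumes "a * a = 1"
  shows "tcoeff (Suc 0) (dilate (aff a b) f) = fps_const (of_int (a * b)) * (fps_X * fps_deriv (fps_scale a f))"
proof (rule fps_ext)
  fix N
  have aa: "of_int a * (of_int a * x) = (x :: 'a)" for x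
    using assms by (metis mult.assoc mult_1 of_int_1 of_int_mult)
  show "tcoeff (Suc 0) (dilate (aff a b) f) $ N
      = (fps_const (of_int (a * b)) * (fps_X * fps_deriv (fps_scale a f))) $ N"
  proof (cases N)
    case (Suc n)
    have "(fps_const (of_int (a * b)) * (fps_X * fps_deriv (fps_scale a f))) $ Suc n
        = of_nat (Suc n) * of_int b * f $ Suc n * (of_int a * (of_int a * of_int a ^ n))"
      by (simp add: fps_scale_def ac_simps)
    also have "\<dots> = of_nat (Suc n) * of_int b * f $ Suc n * of_int a ^ n"
      by (simp only: aa)
    finally show ?thesis using Suc by (simp add: tcoeff_dilate_aff ac_simps)
  qed (simp add: tcoeff_dilate_aff)
qed

definition mps_subst :: "nat \<Rightarrow> (nat \<Rightarrow> 'a::comm_ring_1 fps) \<Rightarrow> 'a mps \<Rightarrow> 'a fps fps" where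
  "mps_subst k v a = Abs_fps (\<lambda>N. \<Sum>m\<in>monomials_deg k N. fps_const (a m) * (\<Prod>i<k. v i ^ m i))"

lemma mps_subst_nth: "mps_subst k v a $ N = (\<Sum>m\<in>monomials_deg k N. fps_const (a m) * (\<Prod>i<k. v i ^ m i))"
  by (simp add: mps_subst_def)

lemma mps_subst_cong:
  assumes "\<And>m. supp_in k m \<Longrightarrow> a m = b m"
  shows "mps_subst k v a = mps_subst k v b"
  unfolding mps_subst_def using assms by (auto simp: monomials_deg_def intro!: fps_ext sum.cong)

lemma mps_subst_add: "mps_subst k v (\<lambda>m. a m + b m) = mps_subst k v a + mps_subst k v b"
  by (rule fps_ext) (simp add: mps_subst_nth fps_const_add[symmetric] distrib_right sum.distrib del: fps_const_add)

lemma mps_subst_const_mult: "mps_subst k v (\<lambda>m. c * a m) = fps_const (fps_const c) * mps_subst k v a"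
  by (rule fps_ext) (simp add: mps_subst_nth fps_const_mult[symmetric] sum_distrib_left mult.assoc del: fps_const_mult)

lemma mps_subst_sum: "mps_subst k v (\<lambda>m. \<Sum>j\<in>J. a j m) = (\<Sum>j\<in>J. mps_subst k v (a j))"
proof (induction J rule: infinite_finite_induct)
  case (insert x F)
  then show ?case using mps_subst_add[of k v "a x" "\<lambda>m. \<Sum>j\<in>F. a j m"] by simp
qed (simp_all add: mps_subst_def fps_eq_iff)

lemma mps_subst_mconst: "mps_subst k v (mconst k c) = fps_const (fps_const c)"
proof (rule fps_ext)
  fix N
  have "mconst k c m = 0" if "m \<in> monomials_deg k N" "N \<noteq> 0" for m
    using that by (auto simp: monomials_deg_def mconst_def mdeg_def)
  then show "mps_subst k v (mconst k c) $ N = fps_const (fps_const c) $ N"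
    by (cases "N = 0") (simp_all add: mps_subst_nth monomials_deg_at_0 mconst_def)
qed

lemma mps_subst_mmult: "mps_subst k v (mmult k a b) = mps_subst k v a * mps_subst k v b"
proof (rule fps_ext)
  fix N
  define V where "V m = (\<Prod>i<k. v i ^ m i)" for m
  have V_split: "V p = V n * V (\<lambda>i. p i - n i)" if "\<forall>i<k. n i \<le> p i" for n p
    unfolding V_def using that by (simp add: prod.distrib[symmetric] power_add[symmetric])
  have "mps_subst k v (mmult k a b) $ N = (\<Sum>p\<in>monomials_deg k N. \<Sum>n\<in>{n. supp_in k n \<and> (\<forall>i<k. n i \<le> p i)}.
      fps_const (a n) * fps_const (b (\<lambda>i. p i - n i)) * V p)"
    by (simp add: mps_subst_nth mmult_def V_def fps_const_sum sum_distrib_right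
          fps_const_mult[symmetric] del: fps_const_mult)
  also have "\<dots> = (\<Sum>p\<in>monomials_deg k N. \<Sum>n\<in>{n. supp_in k n \<and> (\<forall>i<k. n i \<le> p i)}.
      fps_const (a n) * fps_const (b (\<lambda>i. p i - n i)) * (V n * V (\<lambda>i. p i - n i)))"
    by (intro sum.cong refl) (simp add: V_split[symmetric])
  also have "\<dots> = (\<Sum>i\<le>N. \<Sum>m\<in>monomials_deg k i. \<Sum>n\<in>monomials_deg k (N - i).
      fps_const (a m) * fps_const (b n) * (V m * V n))"
    by (rule sum_monomials_deg_convolution)
  also have "\<dots> = (mps_subst k v a * mps_subst k v b) $ N"
    by (simp add: fps_mult_nth mps_subst_nth V_def sum_product atLeast0AtMost mult.assoc mult.left_commute
          fps_const_mult[symmetric] del: fps_const_mult)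
  finally show "mps_subst k v (mmult k a b) $ N = (mps_subst k v a * mps_subst k v b) $ N" .
qed

lemma mps_subst_linsub: "mps_subst k v (linsub k f w) = dilate (\<Sum>i<k. of_int (w i) * v i) f"
proof (rule fps_ext)
  fix N
  have "mps_subst k v (linsub k f w) $ N = (\<Sum>m\<in>monomials_deg k N. fps_const (f $ N) *
      (of_nat (fact N div (\<Prod>i<k. fact (m i))) * (\<Prod>i<k. (of_int (w i) * v i) ^ m i)))"
    unfolding mps_subst_nth
  proof (intro sum.cong refl)
    fix m assume "m \<in> monomials_deg k N"
    then have md: "mdeg k m = N" by (simp add: monomials_deg_def)
    show "fps_const (linsub k f w m) * (\<Prod>i<k. v i ^ m i) = fps_const (f $ N) *
      (of_nat (fact N div (\<Prod>i<k. fact (m i))) * (\<Prod>i<k. (of_int (w i) * v i) ^ m i))"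
      unfolding linsub_def md
      by (simp add: fps_const_prod fps_of_nat fps_of_int power_mult_distrib prod.distrib ac_simps
            fps_const_mult[symmetric] fps_const_power[symmetric] del: fps_const_mult fps_const_power)
  qed
  also have "\<dots> = fps_const (f $ N) * (\<Sum>i<k. of_int (w i) * v i) ^ N"
    by (simp add: multinomial_formula sum_distrib_left)
  finally show "mps_subst k v (linsub k f w) $ N = dilate (\<Sum>i<k. of_int (w i) * v i) f $ N"
    by (simp add: dilate_nth)
qed

lemma mps_subst_mprodL: "mps_subst k v (mprodL k as) = prod_list (map (mps_subst k v) as)"
  by (induction as) (simp_all add: mps_subst_mconst mps_subst_mmult)

lemma equiv_genus_eq_subst:
  fixes v :: "nat \<Rightarrow> 'a::comm_ring_1 fps" and f :: "'a fps"
  assumes "equiv_genus_eq k f pts c"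
  defines "D \<equiv> \<lambda>q. prod_list (map (\<lambda>w. dilate (\<Sum>i<k. of_int (w i) * v i) f) (snd (pts ! q)))"
  shows "(\<Sum>j<length pts. of_int (fst (pts ! j)) * prod_list (map D (filter (\<lambda>q. q \<noteq> j) [0..<length pts])))
         = fps_const (fps_const c) * prod_list (map D [0..<length pts])"
proof -
  have den: "mps_subst k v (fp_den k f pts q) = D q" for q
    by (simp add: fp_den_def mps_subst_mprodL D_def o_def mps_subst_linsub)
  have "mps_subst k v (\<lambda>m. \<Sum>j<length pts. of_int (fst (pts ! j))
            * mprodL k (map (fp_den k f pts) (filter (\<lambda>q. q \<noteq> j) [0..<length pts])) m)
      = mps_subst k v (\<lambda>m. c * mprodL k (map (fp_den k f pts) [0..<length pts]) m)"
    using assms(1) unfolding equiv_genus_eq_def by (intro mps_subst_cong) auto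
  then show ?thesis
    by (simp add: mps_subst_sum mps_subst_const_mult mps_subst_mprodL o_def den fps_of_int)
qed

section \<open>Clearing denominators in a fixed point formula\<close>

lemma prod_list_map_filter_neq_upt: "prod_list (map D (filter (\<lambda>q. q \<noteq> j) [0..<N])) = prod D ({..<N} - {j})"
proof -
  have "prod_list (map D (filter (\<lambda>q. q \<noteq> j) [0..<N])) = prod D (set (filter (\<lambda>q. q \<noteq> j) [0..<N]))"
    by (rule prod.distinct_set_conv_list[symmetric]) simp
  also have "set (filter (\<lambda>q. q \<noteq> j) [0..<N]) = {..<N} - {j}" by auto
  finally show ?thesis .
qed

lemma prod_list_map_upt: "prod_list (map D [0..<N]) = prod D {..<N}"
  by (metis atLeast_upt prod.distinct_set_conv_list distinct_upt)

text \<open>When every denominator factors as $D_q = Z s^{n_q} U_q$ with $U_q$ a unit, multiplying the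
  cleared identity by $\prod_q U_q^{-1}$ gives back the fixed point sum, up to a common factor.\<close>

lemma fixed_point_sum_mult_inverses:
  fixes D U V \<sigma> :: "nat \<Rightarrow> 'a::comm_ring_1" and n :: "nat \<Rightarrow> nat"
  assumes D: "\<And>q. q < N \<Longrightarrow> D q = Z * s ^ n q * U q"
    and UV: "\<And>q. q < N \<Longrightarrow> U q * V q = 1"
    and H: "(\<Sum>j<N. \<sigma> j * prod_list (map D (filter (\<lambda>q. q \<noteq> j) [0..<N]))) = C * prod_list (map D [0..<N])"
  shows "(\<Sum>j<N. \<sigma> j * (Z ^ (N - 1) * s ^ ((\<Sum>q<N. n q) - n j) * V j)) = C * (Z ^ N * s ^ (\<Sum>q<N. n q))"
proof -
  have PD: "prod D A = Z ^ card A * s ^ (sum n A) * prod U A" if "A \<subseteq> {..<N}" for A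
  proof -
    have "prod D A = prod (\<lambda>q. Z * s ^ n q * U q) A" using that D by (intro prod.cong) auto
    then show ?thesis by (simp add: prod.distrib power_sum)
  qed
  have PUV: "prod U A * prod V A = 1" if "A \<subseteq> {..<N}" for A
  proof -
    have "prod U A * prod V A = prod (\<lambda>q. U q * V q) A" by (simp add: prod.distrib)
    also have "\<dots> = 1" using that UV by (intro prod.neutral) auto
    finally show ?thesis .
  qed
  have "prod D ({..<N} - {j}) * prod V {..<N} = Z ^ (N - 1) * s ^ ((\<Sum>q<N. n q) - n j) * V j"
    if "j < N" for j
  proof -
    have "prod V {..<N} = V j * prod V ({..<N} - {j})" using that by (simp add: prod.remove)
    moreover have "sum n ({..<N} - {j}) = (\<Sum>q<N. n q) - n j" using that by (simp add: sum_diff1_nat)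
    ultimately have "prod D ({..<N} - {j}) * prod V {..<N}
        = Z ^ (N - 1) * s ^ ((\<Sum>q<N. n q) - n j) * V j * (prod U ({..<N} - {j}) * prod V ({..<N} - {j}))"
      using that PD[of "{..<N} - {j}"] by (simp add: ac_simps)
    then show ?thesis using PUV[of "{..<N} - {j}"] by simp
  qed
  moreover have "prod D {..<N} * prod V {..<N} = Z ^ N * s ^ (\<Sum>q<N. n q)"
    using PD[of "{..<N}"] PUV[of "{..<N}"] by (simp add: mult.assoc)
  moreover have "(\<Sum>j<N. \<sigma> j * prod D ({..<N} - {j})) * prod V {..<N} = C * (prod D {..<N} * prod V {..<N})"
    using H unfolding prod_list_map_filter_neq_upt prod_list_map_upt by (simp add: mult.assoc)
  ultimately show ?thesis by (simp add: sum_distrib_right mult.assoc)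
qed

lemma fixed_point_sum_divide:
  fixes D U V \<sigma> :: "nat \<Rightarrow> 'a::comm_ring_1" and n :: "nat \<Rightarrow> nat"
  assumes D: "\<And>q. q < N \<Longrightarrow> D q = Z * s ^ n q * U q"
    and UV: "\<And>q. q < N \<Longrightarrow> U q * V q = 1"
    and N0: "N > 0" and nle: "\<And>q. q < N \<Longrightarrow> n q \<le> m" and mT: "m \<le> (\<Sum>q<N. n q)"
    and H: "(\<Sum>j<N. \<sigma> j * prod_list (map D (filter (\<lambda>q. q \<noteq> j) [0..<N]))) = C * prod_list (map D [0..<N])"
  shows "Z ^ (N - 1) * s ^ ((\<Sum>q<N. n q) - m) * ((\<Sum>j<N. \<sigma> j * (s ^ (m - n j) * V j)) - C * (Z * s ^ m)) = 0"
proof -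
  define T where "T = (\<Sum>q<N. n q)"
  have "Z ^ (N - 1) * s ^ (T - m) * (\<sigma> j * (s ^ (m - n j) * V j)) = \<sigma> j * (Z ^ (N - 1) * s ^ (T - n j) * V j)"
    if "j < N" for j
  proof -
    have "T - n j = (T - m) + (m - n j)" using nle[OF that] mT by (simp add: T_def)
    then show ?thesis by (simp add: power_add ac_simps)
  qed
  moreover have "Z ^ (N - 1) * s ^ (T - m) * (C * (Z * s ^ m)) = C * (Z ^ N * s ^ T)"
    using N0 mT by (cases N) (simp_all add: T_def power_add[symmetric] ac_simps)
  ultimately have "Z ^ (N - 1) * s ^ (T - m) * ((\<Sum>j<N. \<sigma> j * (s ^ (m - n j) * V j)) - C * (Z * s ^ m))
      = (\<Sum>j<N. \<sigma> j * (Z ^ (N - 1) * s ^ (T - n j) * V j)) - C * (Z ^ N * s ^ T)"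
    by (simp add: right_diff_distrib sum_distrib_left)
  also have "\<dots> = 0" using fixed_point_sum_mult_inverses[OF D UV H] by (simp add: T_def)
  finally show ?thesis by (simp add: T_def)
qed

section \<open>The sphere $S^6$: the exponent is $e^{\alpha x}$ times an odd series\<close>

text \<open>Substituting $x_1 \mapsto u$, $x_2 \mapsto u t$ turns the weight $(a, b)$ into $u(a + b t)$.\<close>

definition S6_vars :: "nat \<Rightarrow> 'a::comm_ring_1 fps" where
  "S6_vars i = aff (if i = 0 then 1 else 0) (if i = 1 then 1 else 0)"

lemma S6_vars_aff: "(\<Sum>i<2. of_int (wv [a, b] i) * S6_vars i) = (aff a b :: 'a::comm_ring_1 fps)"
  unfolding S6_vars_def sum_of_int_mult_aff by (simp add: wv_def numeral_2_eq_2)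

lemma S6_subst_identity:
  fixes f :: "'a::comm_ring_1 fps"
  assumes "equiv_genus_eq 2 f S6_data 0"
  shows "dilate (aff (-1) 0) f * (dilate (aff 0 (-1)) f * dilate (aff 1 1) f)
       + dilate (aff 1 0) f * (dilate (aff 0 1) f * dilate (aff (-1) (-1)) f) = 0"
  using equiv_genus_eq_subst[OF assms, of S6_vars]
  by (simp add: S6_data_def S6_vars_aff del: lessThan_Suc)

text \<open>The coefficient of $t^2$ in the identity above is $u^2$ times the left-hand side.\<close>

lemma S6_functional_ode:
  fixes f :: "'a::comm_ring_1 fps"
  assumes f0: "f $ 0 = 0" and f1: "f $ 1 = 1" and eq: "equiv_genus_eq 2 f S6_data 0"
  shows "f * fps_deriv (fps_scale (-1) f) - fps_scale (-1) f * fps_deriv f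
      + fps_const (2 * f $ 2) * f * fps_scale (-1) f = 0"
proof -
  let ?h = "fps_scale (-1) f"
  have two: "fps_const (2 * f $ 2) = 2 * fps_const (f $ 2)"
    by (simp add: fps_numeral_fps_const)
  have "0 = tcoeff 2 (dilate (aff (-1) 0) f * (dilate (aff 0 (-1)) f * dilate (aff 1 1) f)
       + dilate (aff 1 0) f * (dilate (aff 0 1) f * dilate (aff (-1) (-1)) f))"
    using S6_subst_identity[OF eq] by (simp add: tcoeff_zero)
  also have "\<dots> = ?h * (fps_const (- 1) * fps_X * (fps_X * fps_deriv f) + fps_const (f $ 2) * fps_X ^ 2 * f)
      + f * (fps_X * (fps_X * fps_deriv ?h) + fps_const (f $ 2) * fps_X ^ 2 * ?h)"
    by (simp add: tcoeff_add tcoeff_2_mult tcoeff_1_mult tcoeff_0_mult tcoeff_0_dilate_aff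
        tcoeff_dilate_aff_t tcoeff_1_dilate_unit_aff f0 f1[simplified] fps_scale_by_1)
  also have "\<dots> = fps_X ^ 2 * (f * fps_deriv ?h - ?h * fps_deriv f + fps_const (2 * f $ 2) * f * ?h)"
    unfolding two by (simp add: algebra_simps power2_eq_square fps_const_neg[symmetric] del: fps_const_neg)
  finally show ?thesis using fps_X_power_mult_cancel by metis
qed

lemma fps_wronskian_eq_imp_zero:
  fixes g k :: "'a::comm_ring_1 fps"
  assumes Q: "Q_algebra TYPE('a)" and g0: "g $ 0 = 0" and g1: "g $ 1 = 1"
    and eq: "g * fps_deriv k = k * fps_deriv g" and k0: "k $ 0 = 0" and k1: "k $ 1 = 0"
  shows "k = 0"
proof -
  have "k $ n = 0" for n
  proof (induction n rule: less_induct)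
    case (less n)
    show ?case
    proof (cases "n \<le> 1")
      case True
      then show ?thesis using k0 k1 by (cases n) auto
    next
      case False
      define m where "m = n - 2"
      then have m: "n = Suc (Suc m)" using False by arith
      have "(g * fps_deriv k) $ n = g $ 0 * (of_nat (n + 1) * k $ (n + 1)) + (g $ 1 * (of_nat n * k $ n)
           + (\<Sum>i=2..n. g $ i * (of_nat (n - i + 1) * k $ (n - i + 1))))"
        using m by (simp add: fps_mult_nth sum.atLeast_Suc_atMost numeral_2_eq_2)
      also have "(\<Sum>i=2..n. g $ i * (of_nat (n - i + 1) * k $ (n - i + 1))) = 0"
        using less m by (intro sum.neutral) auto
      finally have "(g * fps_deriv k) $ n = of_nat n * k $ n" using g0 g1 by simp
      moreover have "(fps_deriv g * k) $ n = fps_deriv g $ 0 * k $ n"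
        using less by (intro fps_mult_nth_eq_head) auto
      ultimately have "of_nat n * k $ n = k $ n" using eq g1 by (simp add: mult.commute)
      then have "of_nat (Suc m) * k $ n = 0" using m by (simp add: algebra_simps)
      then show ?thesis using Q_algebra_of_nat_mult_eq_0[OF Q, of "Suc m" "k $ n"] by simp
    qed
  qed
  then show ?thesis by (simp add: fps_eq_iff)
qed

lemma S6_rigidity_exp_odd_factor:
  fixes f :: "'a::comm_ring_1 fps"
  assumes Q: "Q_algebra TYPE('a)" and f0: "f $ 0 = 0" and f1: "f $ 1 = 1"
    and eq: "equiv_genus_eq 2 f S6_data 0"
  obtains \<alpha> g where "f = rexp \<alpha> * g" "g $ 0 = 0" "g $ 1 = 1" "fps_scale (-1) g = - g"
proof -
  define \<alpha> where "\<alpha> = f $ 2"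
  define g where "g = rexp (- \<alpha>) * f"
  define h where "h = fps_scale (-1) g"
  have EE: "rexp \<alpha> * rexp (- \<alpha>) = 1" by (rule rexp_mult_rexp_uminus[OF Q])
  have fg: "f = rexp \<alpha> * g" unfolding g_def using EE by (simp add: mult.assoc[symmetric])
  have g0: "g $ 0 = 0" unfolding g_def using f0 by simp
  have g1: "g $ 1 = 1" unfolding g_def using f0 f1 rexp_nth_0[OF Q] by (simp add: fps_mult_nth numeral_2_eq_2)
  have "fps_scale (-1) f = rexp (- \<alpha>) * h"
    unfolding h_def fg by (simp add: fps_scale_mult fps_scale_rexp)
  then have "0 = f * fps_deriv (rexp (- \<alpha>) * h) - rexp (- \<alpha>) * h * fps_deriv f
      + 2 * fps_const \<alpha> * f * (rexp (- \<alpha>) * h)"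
    using S6_functional_ode[OF f0 f1 eq] by (simp add: \<alpha>_def fps_numeral_fps_const)
  also have "\<dots> = (rexp \<alpha> * rexp (- \<alpha>)) * (g * fps_deriv h - h * fps_deriv g)"
  proof -
    have "fps_deriv (rexp \<alpha>) = fps_const \<alpha> * rexp \<alpha>" "fps_deriv (rexp (- \<alpha>)) = - fps_const \<alpha> * rexp (- \<alpha>)"
      using fps_deriv_rexp[OF Q, of \<alpha>] fps_deriv_rexp[OF Q, of "- \<alpha>"] by simp_all
    then show ?thesis unfolding fg by (simp add: fps_deriv_mult algebra_simps del: fps_const_neg)
  qed
  finally have "g * fps_deriv h = h * fps_deriv g" using EE by simp
  then have "h + g = 0"
    using g0 g1 by (intro fps_wronskian_eq_imp_zero[OF Q g0 g1]) (simp_all add: algebra_simps h_def fps_scale_def)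
  then have "fps_scale (-1) g = - g" by (simp add: h_def eq_neg_iff_add_eq_0)
  with fg g0 g1 show ?thesis using that by blast
qed

section \<open>The quasitoric manifold $\widetilde L(2,3)$\<close>

definition aff_inverse :: "int \<Rightarrow> int \<Rightarrow> 'a::comm_ring_1 fps" where
  "aff_inverse k m = Abs_fps (\<lambda>j. (- of_int m) ^ j * int_inv k ^ (j + 1))"

lemma aff_mult_aff_inverse:
  assumes Q: "Q_algebra TYPE('a::comm_ring_1)" and k: "k \<noteq> 0"
  shows "aff k m * (aff_inverse k m :: 'a fps) = 1"
proof (rule fps_ext)
  fix n
  have kk: "of_int k * (int_inv k :: 'a) = 1" by (rule of_int_mult_int_inv[OF Q k])
  show "(aff k m * aff_inverse k m) $ n = (1 :: 'a fps) $ n"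
  proof (cases n)
    case 0 then show ?thesis using kk by (simp add: aff_def aff_inverse_def)
  next
    case (Suc j)
    have "(aff k m * (aff_inverse k m :: 'a fps)) $ Suc j = of_int k * ((- of_int m) ^ Suc j * int_inv k ^ (Suc j + 1))
         + of_int m * ((- of_int m) ^ j * int_inv k ^ (j + 1))"
      by (simp add: aff_def aff_inverse_def algebra_simps fps_of_int[symmetric] del: fps_of_int)
    also have "\<dots> = (- of_int m) ^ Suc j * int_inv k ^ Suc j * (of_int k * int_inv k) + of_int m * ((- of_int m) ^ j * int_inv k ^ (j + 1))"
      by (simp add: algebra_simps)
    also have "\<dots> = 0" using kk by (simp add: algebra_simps)
    finally show ?thesis using Suc by simp
  qed
qed

text \<open>\<open>recip_dilate P k m\<close> is $P(u(k + m t))/(k + m t)$ and \<open>recip_dilate_t P m\<close> is $P(u m t)/m$.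
  For $f = e^{\alpha x} x\, g$, the factor $f(u(a + b t))$ of a denominator is
  $e^{\alpha u (a + b t)}\, u\, t^{[a = 0]}$ times the unit \<open>wunit g (a, b)\<close>;
  if $g P = 1$, its inverse is \<open>wunit_inv P (a, b)\<close>.\<close>

definition recip_dilate :: "'a::comm_ring_1 fps \<Rightarrow> int \<Rightarrow> int \<Rightarrow> 'a fps fps" where
  "recip_dilate P k m = Abs_fps (\<lambda>N. fps_const (P $ N) * (if N = 0 then aff_inverse k m else aff k m ^ (N - 1)))"

definition recip_dilate_t :: "'a::comm_ring_1 fps \<Rightarrow> int \<Rightarrow> 'a fps fps" where
  "recip_dilate_t P m = fps_const (fps_const (int_inv m)) * dilate (aff 0 m) P"

definition wunit :: "'a::comm_ring_1 fps \<Rightarrow> int \<times> int \<Rightarrow> 'a fps fps" where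
  "wunit gt km = (case km of (k, m) \<Rightarrow> if k = 0 then fps_const (fps_const (of_int m)) * dilate (aff 0 m) gt
      else fps_const (aff k m) * dilate (aff k m) gt)"

definition wunit_inv :: "'a::comm_ring_1 fps \<Rightarrow> int \<times> int \<Rightarrow> 'a fps fps" where
  "wunit_inv P km = (case km of (k, m) \<Rightarrow> if k = 0 then recip_dilate_t P m else recip_dilate P k m)"

lemma aff_mult_recip_dilate:
  assumes Q: "Q_algebra TYPE('a::comm_ring_1)" and k: "k \<noteq> 0"
  shows "fps_const (aff k m) * recip_dilate P k m = dilate (aff k m) (P :: 'a fps)"
proof (rule fps_ext)
  fix N show "(fps_const (aff k m) * recip_dilate P k m) $ N = dilate (aff k m) P $ N"
  proof (cases N)
    case 0
    have "(fps_const (aff k m) * recip_dilate P k m) $ 0 = aff k m * (fps_const (P $ 0) * aff_inverse k m)" by (simp add: recip_dilate_def)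
    also have "\<dots> = fps_const (P $ 0) * (aff k m * aff_inverse k m)" by (simp only: ac_simps)
    also have "\<dots> = dilate (aff k m) P $ 0" using aff_mult_aff_inverse[OF Q k, of m] by (simp add: dilate_nth)
    finally show ?thesis using 0 by simp
  next
    case (Suc n) then show ?thesis by (simp add: recip_dilate_def dilate_nth ac_simps)
  qed
qed

lemma wunit_mult_wunit_inv:
  assumes Q: "Q_algebra TYPE('a::comm_ring_1)" and inv: "gt * P = (1 :: 'a fps)"
    and nonzero: "fst km \<noteq> 0 \<or> snd km \<noteq> 0"
  shows "wunit gt km * wunit_inv P km = 1"
proof -
  obtain k m where km: "km = (k, m)" by (cases km)
  show ?thesis
  proof (cases "k = 0")
    case True
    then have m: "m \<noteq> 0" using nonzero km by simp
    have e1: "(fps_const (fps_const (of_int m)) :: 'a fps fps) * fps_const (fps_const (int_inv m)) = 1"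
      using of_int_mult_int_inv[OF Q m] by simp
    have "wunit gt km * wunit_inv P km = fps_const (fps_const (of_int m)) * dilate (aff 0 m) gt * (fps_const (fps_const (int_inv m)) * dilate (aff 0 m) P)"
      using True km by (simp add: wunit_def wunit_inv_def recip_dilate_t_def)
    also have "\<dots> = (fps_const (fps_const (of_int m)) * fps_const (fps_const (int_inv m))) * (dilate (aff 0 m) gt * dilate (aff 0 m) P)"
      by (simp only: ac_simps)
    also have "\<dots> = 1" unfolding e1 by (simp add: dilate_mult[symmetric] inv dilate_one)
    finally show ?thesis .
  next
    case False
    have "wunit gt km * wunit_inv P km = dilate (aff k m) gt * (fps_const (aff k m) * recip_dilate P k m)"
      using False km by (simp add: wunit_def wunit_inv_def ac_simps)
    also have "\<dots> = 1" by (simp add: aff_mult_recip_dilate[OF Q False] dilate_mult[symmetric] inv dilate_one)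
    finally show ?thesis .
  qed
qed

lemma prod_wunit_mult_prod_wunit_inv:
  assumes Q: "Q_algebra TYPE('a::comm_ring_1)" and inv: "gt * P = (1 :: 'a fps)"
    and nonzero: "\<forall>km\<in>set ws. fst km \<noteq> 0 \<or> snd km \<noteq> 0"
  shows "prod_list (map (wunit gt) ws) * prod_list (map (wunit_inv P) ws) = 1"
  using nonzero
proof (induction ws)
  case Nil then show ?case by simp
next
  case (Cons km ws)
  have IH: "prod_list (map (wunit gt) ws) * prod_list (map (wunit_inv P) ws) = 1" using Cons by simp
  have h: "wunit gt km * wunit_inv P km = 1" using Cons.prems wunit_mult_wunit_inv[OF Q inv, of km] by simp
  have "prod_list (map (wunit gt) (km # ws)) * prod_list (map (wunit_inv P) (km # ws))
      = (wunit gt km * wunit_inv P km) * (prod_list (map (wunit gt) ws) * prod_list (map (wunit_inv P) ws))"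
    by (simp add: ac_simps)
  also have "\<dots> = 1" by (simp only: IH h mult_1)
  finally show ?case .
qed

text \<open>\<open>theta12 P\<close> is $\tfrac12(\theta - 1)(\theta - 2) P$ for the Euler operator $\theta = x\,d/dx$.\<close>

definition theta12 :: "'a::comm_ring_1 fps \<Rightarrow> 'a fps" where
  "theta12 P = Abs_fps (\<lambda>N. of_nat (if N = 0 then 1 else (N - 1) choose 2) * P $ N)"

definition sn_defect :: "'a::comm_ring_1 fps \<Rightarrow> 'a fps" where
  "sn_defect P = P ^ 3 - fps_const (3 * P $ 2) * fps_X ^ 2 * P - theta12 P"

lemma tcoeff_0_recip_dilate:
  assumes Q: "Q_algebra TYPE('a::comm_ring_1)" and k: "k \<noteq> 0"
  shows "tcoeff 0 (recip_dilate P k m) = fps_const (int_inv k) * fps_scale k (P :: 'a fps)"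
proof (rule fps_ext)
  fix N
  have kk: "of_int k * (int_inv k :: 'a) = 1" by (rule of_int_mult_int_inv[OF Q k])
  show "tcoeff 0 (recip_dilate P k m) $ N = (fps_const (int_inv k) * fps_scale k P) $ N"
  proof (cases N)
    case 0 then show ?thesis by (simp add: tcoeff_nth recip_dilate_def aff_inverse_def fps_scale_def)
  next
    case (Suc n)
    have "(fps_const (int_inv k) * fps_scale k P) $ Suc n = (of_int k * int_inv k) * (P $ Suc n * of_int k ^ n)"
      by (simp add: fps_scale_def ac_simps)
    then show ?thesis using Suc kk by (simp add: tcoeff_nth recip_dilate_def aff_power_nth)
  qed
qed

lemma tcoeff_2_recip_dilate:
  assumes Q: "Q_algebra TYPE('a::comm_ring_1)" and k: "k \<noteq> 0"
  shows "tcoeff 2 (recip_dilate P k m) = fps_const (of_int m ^ 2 * int_inv k ^ 3) * fps_scale k (theta12 (P :: 'a fps))"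
proof (rule fps_ext)
  fix N
  have kk: "of_int k * (int_inv k :: 'a) = 1" by (rule of_int_mult_int_inv[OF Q k])
  show "tcoeff 2 (recip_dilate P k m) $ N = (fps_const (of_int m ^ 2 * int_inv k ^ 3) * fps_scale k (theta12 P)) $ N"
  proof (cases "N \<ge> 3")
    case True
    define n where "n = N - 3"
    have n: "N = Suc (Suc (Suc n))" using True unfolding n_def by arith
    have A: "tcoeff 2 (recip_dilate P k m) $ N = P $ N * (of_nat ((N - 1) choose 2) * of_int k ^ n * of_int m ^ 2)"
    proof -
      have "tcoeff 2 (recip_dilate P k m) $ N = P $ N * ((aff k m ^ (N - 1)) $ 2)" using True by (simp add: tcoeff_nth recip_dilate_def)
      also have "\<dots> = P $ N * (of_nat ((N - 1) choose 2) * of_int k ^ (N - 1 - 2) * of_int m ^ 2)"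
        by (simp only: aff_power_nth)
      also have "N - 1 - 2 = n" using n by simp
      finally show ?thesis .
    qed
    have B: "(fps_const (of_int m ^ 2 * int_inv k ^ 3) * fps_scale k (theta12 P)) $ N
        = of_int m ^ 2 * (int_inv k ^ 3 * of_int k ^ N) * (of_nat ((N - 1) choose 2) * P $ N)"
      using True by (simp add: fps_scale_def theta12_def ac_simps)
    have "(int_inv k :: 'a) ^ 3 * of_int k ^ N = (of_int k * int_inv k) ^ 3 * of_int k ^ n"
      using n by (simp add: algebra_simps power3_eq_cube)
    then have C: "(int_inv k :: 'a) ^ 3 * of_int k ^ N = of_int k ^ n" using kk by simp
    show ?thesis unfolding A B C by (simp add: ac_simps)
  next
    case False
    then have "N = 0 \<or> N = 1 \<or> N = 2" by auto
    then show ?thesis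
      by (auto simp: tcoeff_nth recip_dilate_def fps_scale_def theta12_def aff_power_nth aff_inverse_def ac_simps numeral_2_eq_2 power2_eq_square power3_eq_cube)
  qed
qed

lemma tcoeff_Suc_recip_dilate_const: "tcoeff (Suc j) (recip_dilate P k 0) = 0"
  by (rule fps_ext) (simp add: tcoeff_nth recip_dilate_def aff_inverse_def aff_power_nth)

lemma tcoeff_recip_dilate_t: "tcoeff j (recip_dilate_t P m) = fps_const (int_inv m) * (fps_const (of_int m ^ j * P $ j) * fps_X ^ j)"
  by (simp only: recip_dilate_t_def tcoeff_const_mult tcoeff_dilate_aff_t)

lemma tcoeff_2_recip_dilate_t:
  assumes Q: "Q_algebra TYPE('a::comm_ring_1)" and m: "m \<noteq> 0"
  shows "tcoeff 2 (recip_dilate_t P m) = fps_const (of_int m) * (fps_const (P $ 2) * fps_X ^ 2 :: 'a fps)"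
proof -
  have "int_inv m * of_int m ^ 2 = (of_int m :: 'a)"
    using of_int_mult_int_inv[OF Q m] by (simp add: power2_eq_square mult.assoc[symmetric] mult.commute)
  then show ?thesis by (simp add: tcoeff_recip_dilate_t mult.assoc[symmetric])
qed

lemma int_inv_cube_mult_fps_scale_sn_defect:
  assumes Q: "Q_algebra TYPE('a::comm_ring_1)" and c: "c \<noteq> 0"
  defines "A \<equiv> fps_const (int_inv c :: 'a)"
  shows "fps_const (int_inv c ^ 3) * fps_scale c (sn_defect P)
    = (A * fps_scale c P) ^ 3 - 3 * (A * fps_scale c P * (fps_const (P $ 2) * fps_X ^ 2))
      - A ^ 3 * fps_scale c (theta12 P)"
proof -
  have cA: "fps_const (of_int c) * A = 1" unfolding A_def using of_int_mult_int_inv[OF Q c] by simp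
  have "fps_scale c (sn_defect P) = fps_scale c P ^ 3
      - fps_const (3 * P $ 2) * (fps_const (of_int c) * fps_X) ^ 2 * fps_scale c P - fps_scale c (theta12 P)"
    by (simp add: sn_defect_def fps_scale_diff fps_scale_mult fps_scale_power fps_scale_const fps_scale_X
        del: fps_const_mult)
  moreover have "A ^ 3 * (fps_const (3 * P $ 2) * (fps_const (of_int c) * fps_X) ^ 2 * fps_scale c P)
      = 3 * (A * fps_scale c P * (fps_const (P $ 2) * fps_X ^ 2)) * (fps_const (of_int c) * A) ^ 2"
    by (simp add: fps_const_mult[symmetric] fps_numeral_fps_const[symmetric] algebra_simps
        power2_eq_square power3_eq_cube del: fps_const_mult fps_const_power)
  ultimately show ?thesis
    using cA by (simp add: A_def[symmetric] right_diff_distrib power_mult_distrib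
        fps_const_power[symmetric] del: fps_const_power)
qed

text \<open>The twelve fixed points of $\widetilde L(2,3)$ form three groups of four with the same
  $\Delta^2$-vertex. After normalisation, the $t^2$-coefficient of the contribution of a group is a
  common factor times \<open>Delta3_contribution P c\<close>, where $c \in \{1, 2, 3\}$ is the weight
  of $x_2$ at that vertex.\<close>

definition Delta3_contribution :: "'a::comm_ring_1 fps \<Rightarrow> int \<Rightarrow> 'a fps" where
  "Delta3_contribution P c =
       tcoeff 2 (recip_dilate P c 0 * (recip_dilate_t P 1 * recip_dilate_t P 1))
     - tcoeff 2 (recip_dilate P c (-1) * (recip_dilate_t P 2 * recip_dilate_t P 1))
     + tcoeff 2 (recip_dilate P c 1 * (recip_dilate_t P 2 * recip_dilate_t P (-1)))
     - tcoeff 0 (recip_dilate P c 1 * (recip_dilate P (-c) 1 * recip_dilate P c 0))"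

lemma Delta3_contribution_eq:
  fixes P :: "'a::comm_ring_1 fps"
  assumes Q: "Q_algebra TYPE('a)" and c: "c \<noteq> 0" and P0: "P $ 0 = 1" and P1: "P $ 1 = 0"
    and ev: "fps_scale (-1) P = P"
  shows "Delta3_contribution P c = fps_const (int_inv c ^ 3) * fps_scale c (sn_defect P)"
proof -
  define A where "A = fps_const (int_inv c :: 'a)"
  define Pc where "Pc = fps_scale c P"
  define Th where "Th = fps_scale c (theta12 P)"
  define q where "q = fps_const (P $ 2) * fps_X ^ 2"
  define h where "h = fps_const (int_inv 2 :: 'a)"
  have h2: "2 * h = 1"
    unfolding h_def using of_int_mult_int_inv[OF Q, of 2] by (simp add: fps_numeral_fps_const)
  have Y0: "tcoeff 0 (recip_dilate P c m) = A * Pc" for m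
    unfolding A_def Pc_def by (rule tcoeff_0_recip_dilate[OF Q c])
  have Y0': "tcoeff 0 (recip_dilate P (- c) 1) = - (A * Pc)"
    using tcoeff_0_recip_dilate[OF Q, of "- c"] c
    by (simp add: A_def Pc_def int_inv_uminus fps_scale_uminus_even[OF ev] fps_const_neg[symmetric]
        del: fps_const_neg)
  have Y1: "tcoeff (Suc 0) (recip_dilate P c 0) = 0" and Y2: "tcoeff 2 (recip_dilate P c 0) = 0"
    using tcoeff_Suc_recip_dilate_const[of 0] tcoeff_Suc_recip_dilate_const[of 1]
    by (simp_all add: numeral_2_eq_2)
  have Y2': "tcoeff 2 (recip_dilate P c m) = A ^ 3 * Th" if "m * m = 1" for m
    using tcoeff_2_recip_dilate[OF Q c, where m = m and P = P] that
    by (simp add: A_def Th_def power2_eq_square flip: of_int_mult)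
  have y0: "tcoeff 0 (recip_dilate_t P 1) = 1" "tcoeff 0 (recip_dilate_t P 2) = h"
    "tcoeff 0 (recip_dilate_t P (-1)) = -1"
    using P0 by (simp_all add: tcoeff_recip_dilate_t h_def int_inv_1[OF Q] int_inv_uminus
        fps_const_neg[symmetric] del: fps_const_neg)
  have y1: "tcoeff (Suc 0) (recip_dilate_t P m) = 0" for m
    using P1 by (simp add: tcoeff_recip_dilate_t)
  have y2: "tcoeff 2 (recip_dilate_t P 1) = q" "tcoeff 2 (recip_dilate_t P 2) = 2 * q"
    "tcoeff 2 (recip_dilate_t P (-1)) = - q"
    using tcoeff_2_recip_dilate_t[OF Q, of _ P]
    by (simp_all add: q_def fps_numeral_fps_const fps_const_neg[symmetric] del: fps_const_neg)
  have "Delta3_contribution P c = A * Pc * (2 * q) - (A * Pc * (h * q + 2 * q) + A ^ 3 * Th * h)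
      + (A * Pc * (- (h * q) - 2 * q) - A ^ 3 * Th * h) + A * Pc * (A * Pc) * (A * Pc)"
    unfolding Delta3_contribution_def
    by (simp add: tcoeff_2_mult tcoeff_1_mult tcoeff_0_mult Y0 Y0' Y1 Y2 Y2' y0 y1 y2 algebra_simps)
  also have "\<dots> = (A * Pc) ^ 3 - 2 * (A * Pc * q) - (2 * h) * (A * Pc * q) - (2 * h) * (A ^ 3 * Th)"
    by (simp add: algebra_simps power3_eq_cube)
  also have "\<dots> = (A * Pc) ^ 3 - 3 * (A * Pc * q) - A ^ 3 * Th"
    unfolding h2 by (simp add: algebra_simps)
  also have "\<dots> = fps_const (int_inv c ^ 3) * fps_scale c (sn_defect P)"
    unfolding A_def Pc_def q_def Th_def by (rule int_inv_cube_mult_fps_scale_sn_defect[OF Q c, symmetric])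
  finally show ?thesis .
qed

text \<open>Substituting $x_1, x_2 \mapsto u$, $x_3 \mapsto 2u$ and $x_4, x_5 \mapsto u t$ turns the
  weight $w$ into $u(w_1 + w_2 + 2 w_3 + (w_4 + w_5) t)$; \<open>Ltilde_aff_weights\<close> lists these
  pairs for the twelve fixed points.\<close>

definition Ltilde_vars :: "nat \<Rightarrow> 'a::comm_ring_1 fps" where
  "Ltilde_vars i = aff (if i < 2 then 1 else if i = 2 then 2 else 0) (if i = 3 \<or> i = 4 then 1 else 0)"

definition Ltilde_aff_weights :: "(int \<times> int) list list" where
  "Ltilde_aff_weights = [[(1,0),(1,0),(2,0),(0,1),(0,1)],
 [(1,0),(1,0),(2,-1),(0,2),(0,1)],
 [(1,0),(1,0),(2,1),(0,2),(0,-1)],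
 [(1,0),(1,0),(2,1),(-2,1),(2,0)],
 [(2,0),(-1,0),(3,0),(0,1),(0,1)],
 [(2,0),(-1,0),(3,-1),(0,2),(0,1)],
 [(2,0),(-1,0),(3,1),(0,2),(0,-1)],
 [(2,0),(-1,0),(3,1),(-3,1),(3,0)],
 [(2,0),(1,0),(1,0),(0,1),(0,1)],
 [(2,0),(1,0),(1,-1),(0,2),(0,1)],
 [(2,0),(1,0),(1,1),(0,2),(0,-1)],
 [(2,0),(1,0),(1,1),(-1,1),(1,0)]]"

lemma Ltilde_vars_aff: "(\<Sum>i<5. of_int (w i) * Ltilde_vars i) = (aff (w 0 + w 1 + 2 * w 2) (w 3 + w 4) :: 'a::comm_ring_1 fps)"
proof -
  have "(\<Sum>i<5. of_int (w i) * Ltilde_vars i) = (aff (\<Sum>i<5. w i * (if i < 2 then 1 else if i = 2 then 2 else 0))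
      (\<Sum>i<5. w i * (if i = 3 \<or> i = 4 then 1 else 0)) :: 'a fps)"
    unfolding Ltilde_vars_def by (rule sum_of_int_mult_aff)
  also have "\<dots> = aff (w 0 + w 1 + 2 * w 2) (w 3 + w 4)"
    by (simp add: numeral_eq_Suc lessThan_Suc ac_simps)
  finally show ?thesis .
qed

lemma Ltilde_data_aff: "map (\<lambda>p. map (\<lambda>w. (\<Sum>i<5. of_int (w i) * Ltilde_vars i)) (snd p)) Ltilde_data = map (map (\<lambda>(a,b). (aff a b :: 'a::comm_ring_1 fps))) Ltilde_aff_weights"
  by (simp add: Ltilde_vars_aff Ltilde_data_def Ltilde_signs_def Ltilde_weight_rows_def Ltilde_aff_weights_def wv_def)

lemma Ltilde_subst_identity:
  fixes f :: "'a::comm_ring_1 fps"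
  assumes "equiv_genus_eq 5 f Ltilde_data c"
  shows "(\<Sum>j<12. of_int (Ltilde_signs ! j) * prod_list (map (\<lambda>q. prod_list (map (\<lambda>(a,b). dilate (aff a b) f) (Ltilde_aff_weights ! q)))
            (filter (\<lambda>q. q \<noteq> j) [0..<12])))
       = fps_const (fps_const c) * prod_list (map (\<lambda>q. prod_list (map (\<lambda>(a,b). dilate (aff a b) f) (Ltilde_aff_weights ! q))) [0..<12])"
proof -
  define D where "D = (\<lambda>q. prod_list (map (\<lambda>w. dilate (\<Sum>i<5. of_int (w i) * Ltilde_vars i) f) (snd (Ltilde_data ! q))))"
  define D' where "D' = (\<lambda>q. prod_list (map (\<lambda>(a,b). dilate (aff a b) f) (Ltilde_aff_weights ! q)))"
  have len: "length Ltilde_data = 12" "length Ltilde_aff_weights = 12"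
    by (simp_all add: Ltilde_data_def Ltilde_signs_def Ltilde_weight_rows_def Ltilde_aff_weights_def)
  have "map fst Ltilde_data = Ltilde_signs" by (simp add: Ltilde_data_def Ltilde_signs_def Ltilde_weight_rows_def)
  then have sg: "fst (Ltilde_data ! j) = Ltilde_signs ! j" if "j < 12" for j
    using that len by (metis nth_map)
  have De: "D q = D' q" if "q < 12" for q
  proof -
    have "map (\<lambda>w. (\<Sum>i<5. of_int (w i) * Ltilde_vars i)) (snd (Ltilde_data ! q)) = map (\<lambda>(a,b). (aff a b :: 'a fps)) (Ltilde_aff_weights ! q)"
      using arg_cong[OF Ltilde_data_aff, of "\<lambda>xs. xs ! q"] that len by simp
    then have "map (\<lambda>L. dilate L f) (map (\<lambda>w. (\<Sum>i<5. of_int (w i) * Ltilde_vars i)) (snd (Ltilde_data ! q)))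
             = map (\<lambda>L. dilate L f) (map (\<lambda>(a,b). (aff a b :: 'a fps)) (Ltilde_aff_weights ! q))" by simp
    moreover have "(\<lambda>L. dilate L f) \<circ> (\<lambda>(a,b). (aff a b :: 'a fps)) = (\<lambda>(a,b). dilate (aff a b) f)"
      by (auto simp: fun_eq_iff)
    ultimately have "map (\<lambda>w. dilate (\<Sum>i<5. of_int (w i) * Ltilde_vars i) f) (snd (Ltilde_data ! q)) = map (\<lambda>(a,b). dilate (aff a b) f) (Ltilde_aff_weights ! q)"
      by (simp only: map_map o_def)
    then show ?thesis unfolding D_def D'_def by simp
  qed
  have H: "(\<Sum>j<12. of_int (fst (Ltilde_data ! j)) * prod_list (map D (filter (\<lambda>q. q \<noteq> j) [0..<12])))
         = fps_const (fps_const c) * prod_list (map D [0..<12])"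
    using equiv_genus_eq_subst[OF assms, of Ltilde_vars] len unfolding D_def by simp
  have m1: "prod_list (map D (filter (\<lambda>q. q \<noteq> j) [0..<12])) = prod_list (map D' (filter (\<lambda>q. q \<noteq> j) [0..<12]))" for j
    by (rule arg_cong[where f = prod_list], rule map_cong) (auto simp: De)
  have m2: "prod_list (map D [0..<12]) = prod_list (map D' [0..<12])"
    by (rule arg_cong[where f = prod_list], rule map_cong) (auto simp: De)
  show ?thesis using H unfolding m1 m2 D'_def[symmetric]
    by (metis (no_types, lifting) sg sum.cong lessThan_iff)
qed

definition t_degree :: "(int \<times> int) list \<Rightarrow> nat" where
  "t_degree ws = length (filter (\<lambda>(a,b). a = 0) ws)"

lemma dilate_aff_factor:
  assumes f: "f = rexp \<alpha> * (fps_X * (gt :: 'a::comm_ring_1 fps))"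
  shows "dilate (aff a b) (f :: 'a fps) = dilate (aff a b) (rexp \<alpha>) * fps_X * fps_const fps_X ^ (if a = 0 then 1 else 0) * wunit gt (a, b)"
proof (cases "a = 0")
  case True
  have e: "fps_const (aff 0 b :: 'a fps) = fps_const fps_X * fps_const (fps_const (of_int b))"
    by (simp add: aff_def mult.commute)
  show ?thesis using True unfolding f
    by (simp add: dilate_mult dilate_X wunit_def e ac_simps del: fps_const_mult)
next
  case False
  then show ?thesis unfolding f by (simp add: dilate_mult dilate_X wunit_def ac_simps)
qed

lemma prod_dilate_aff_factor:
  assumes Q: "Q_algebra TYPE('a::comm_ring_1)" and f: "f = rexp \<alpha> * (fps_X * gt)"
  shows "prod_list (map (\<lambda>(a,b). dilate (aff a b) (f :: 'a fps)) ws)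
       = dilate (aff (sum_list (map fst ws)) (sum_list (map snd ws))) (rexp \<alpha>) * fps_X ^ length ws
         * fps_const fps_X ^ t_degree ws * prod_list (map (wunit gt) ws)"
proof (induction ws)
  case Nil
  then show ?case by (simp add: dilate_aff_0_rexp[OF Q] t_degree_def)
next
  case (Cons km ws)
  obtain a b where km: "km = (a, b)" by (cases km)
  have "prod_list (map (\<lambda>(a,b). dilate (aff a b) f) (km # ws))
      = (dilate (aff a b) (rexp \<alpha>) * fps_X * fps_const fps_X ^ (if a = 0 then 1 else 0) * wunit gt (a, b))
      * (dilate (aff (sum_list (map fst ws)) (sum_list (map snd ws))) (rexp \<alpha>) * fps_X ^ length ws
         * fps_const fps_X ^ t_degree ws * prod_list (map (wunit gt) ws))"
    using Cons km dilate_aff_factor[OF f, of a b] by simp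
  also have "\<dots> = (dilate (aff a b) (rexp \<alpha>) * dilate (aff (sum_list (map fst ws)) (sum_list (map snd ws))) (rexp \<alpha>))
      * (fps_X * fps_X ^ length ws) * (fps_const fps_X ^ (if a = 0 then 1 else 0) * fps_const fps_X ^ t_degree ws)
      * (wunit gt (a, b) * prod_list (map (wunit gt) ws))"
    by (simp only: ac_simps)
  also have "\<dots> = dilate (aff (sum_list (map fst (km # ws))) (sum_list (map snd (km # ws)))) (rexp \<alpha>)
      * fps_X ^ length (km # ws) * fps_const fps_X ^ t_degree (km # ws) * prod_list (map (wunit gt) (km # ws))"
    unfolding dilate_aff_rexp_mult[OF Q] using km by (simp add: t_degree_def power_add[symmetric])
  finally show ?case .
qed

lemma Ltilde_aff_weights_props: "\<forall>q<12. sum_list (map fst (Ltilde_aff_weights ! q)) = 4 \<and> sum_list (map snd (Ltilde_aff_weights ! q)) = 2 \<and> length (Ltilde_aff_weights ! q) = 5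
   \<and> t_degree (Ltilde_aff_weights ! q) \<le> 2 \<and> (\<forall>km\<in>set (Ltilde_aff_weights ! q). fst km \<noteq> 0 \<or> snd km \<noteq> 0)"
proof -
  have all12: "\<And>P. (\<forall>i<(12::nat). P i) \<longleftrightarrow> (\<forall>i\<in>set [0..<12]. P i)" by auto
  show ?thesis unfolding all12 by (simp add: Ltilde_aff_weights_def t_degree_def upt_rec)
qed

lemma sum_t_degree: "(\<Sum>q<12. t_degree (Ltilde_aff_weights ! q)) = 18"
proof -
  have "(\<Sum>q<12. t_degree (Ltilde_aff_weights ! q)) = sum_list (map (\<lambda>q. t_degree (Ltilde_aff_weights ! q)) [0..<12])"
    by (simp add: sum_list_distinct_conv_sum_set atLeast_upt)
  also have "\<dots> = 18" by (simp add: Ltilde_aff_weights_def t_degree_def upt_rec)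
  finally show ?thesis .
qed

lemma Ltilde_normalized_identity:
  fixes f gt P :: "'a::comm_ring_1 fps"
  assumes Q: "Q_algebra TYPE('a)" and f: "f = rexp \<alpha> * (fps_X * gt)" and inv: "gt * P = 1"
    and eq: "equiv_genus_eq 5 f Ltilde_data c"
  shows "(\<Sum>j<12. of_int (Ltilde_signs ! j) * (fps_const fps_X ^ (2 - t_degree (Ltilde_aff_weights ! j)) * prod_list (map (wunit_inv P) (Ltilde_aff_weights ! j))))
       = fps_const (fps_const c) * (dilate (aff 4 2) (rexp \<alpha>) * fps_X ^ 5 * fps_const fps_X ^ 2)"
proof -
  define E where "E = dilate (aff 4 2) (rexp \<alpha>)"
  define Z where "Z = E * fps_X ^ 5"
  define s :: "'a fps fps" where "s = fps_const fps_X"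
  define W where "W = (\<Sum>j<12. of_int (Ltilde_signs ! j) * (s ^ (2 - t_degree (Ltilde_aff_weights ! j)) * prod_list (map (wunit_inv P) (Ltilde_aff_weights ! j))))"
  define C :: "'a fps fps" where "C = fps_const (fps_const c)"
  have D: "prod_list (map (\<lambda>(a,b). dilate (aff a b) f) (Ltilde_aff_weights ! q)) = Z * s ^ t_degree (Ltilde_aff_weights ! q) * prod_list (map (wunit gt) (Ltilde_aff_weights ! q))"
    if "q < 12" for q
    using prod_dilate_aff_factor[OF Q f, of "Ltilde_aff_weights ! q"] Ltilde_aff_weights_props that by (simp add: Z_def E_def s_def)
  have UV: "prod_list (map (wunit gt) (Ltilde_aff_weights ! q)) * prod_list (map (wunit_inv P) (Ltilde_aff_weights ! q)) = 1" if "q < 12" for q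
    using prod_wunit_mult_prod_wunit_inv[OF Q inv] Ltilde_aff_weights_props that by simp
  have "Z ^ (12 - 1) * s ^ ((\<Sum>q<12. t_degree (Ltilde_aff_weights ! q)) - 2) * (W - C * (Z * s ^ 2)) = 0"
    unfolding W_def C_def
    by (rule fixed_point_sum_divide[where D = "\<lambda>q. prod_list (map (\<lambda>(a,b). dilate (aff a b) f) (Ltilde_aff_weights ! q))", OF D UV _ _ _ Ltilde_subst_identity[OF eq]])
       (use Ltilde_aff_weights_props sum_t_degree in auto)
  then have h: "Z ^ 11 * s ^ 16 * (W - C * (Z * s ^ 2)) = 0" using sum_t_degree by simp
  define E' where "E' = rexp (- (fps_const \<alpha> * aff 4 2) :: 'a fps)"
  have EE: "E * E' = 1" unfolding E_def E'_def dilate_rexp[OF Q] by (rule rexp_mult_rexp_uminus[OF Q_algebra_fps[OF Q]])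
  have "E' ^ 11 * (Z ^ 11 * s ^ 16 * (W - C * (Z * s ^ 2))) = (E * E') ^ 11 * (fps_X ^ 55 * (s ^ 16 * (W - C * (Z * s ^ 2))))"
    unfolding Z_def by (simp add: power_mult_distrib power_mult[symmetric] ac_simps)
  then have "fps_X ^ 55 * (s ^ 16 * (W - C * (Z * s ^ 2))) = 0" using h EE by simp
  then have "s ^ 16 * (W - C * (Z * s ^ 2)) = 0" by (rule fps_X_power_mult_cancel)
  then have "W - C * (Z * s ^ 2) = 0" unfolding s_def by (rule const_X_power_mult_cancel)
  then show ?thesis by (simp add: W_def C_def Z_def E_def s_def)
qed

lemma Ltilde_tcoeff_2_sum:
  fixes P :: "'a::comm_ring_1 fps"
  shows "(\<Sum>j<12. of_int (Ltilde_signs ! j) * tcoeff (t_degree (Ltilde_aff_weights ! j)) (prod_list (map (wunit_inv P) (Ltilde_aff_weights ! j))))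
    = tcoeff 0 (recip_dilate P 1 0) * tcoeff 0 (recip_dilate P 1 0) * Delta3_contribution P 2 + tcoeff 0 (recip_dilate P 2 0) * tcoeff 0 (recip_dilate P (-1) 0) * Delta3_contribution P 3
      - tcoeff 0 (recip_dilate P 2 0) * tcoeff 0 (recip_dilate P 1 0) * Delta3_contribution P 1"
  by (simp add: numeral_eq_Suc lessThan_Suc Ltilde_aff_weights_def Ltilde_signs_def t_degree_def
      wunit_inv_def tcoeff_mult_const_left tcoeff_Suc_recip_dilate_const Delta3_contribution_def)
    (simp add: algebra_simps)

lemma Ltilde_functional_eq:
  fixes f gt P :: "'a::comm_ring_1 fps"
  assumes Q: "Q_algebra TYPE('a)" and f: "f = rexp \<alpha> * (fps_X * gt)" and inv: "gt * P = 1"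
    and eq: "equiv_genus_eq 5 f Ltilde_data c"
    and P0: "P $ 0 = 1" and P1: "P $ 1 = 0" and ev: "fps_scale (-1) P = P"
  shows "P * P * (fps_const (int_inv 2 ^ 3) * fps_scale 2 (sn_defect P))
      - fps_const (int_inv 2) * fps_scale 2 P * P * (fps_const (int_inv 3 ^ 3) * fps_scale 3 (sn_defect P))
      - fps_const (int_inv 2) * fps_scale 2 P * P * sn_defect P = fps_const c * (fps_scale 4 (rexp \<alpha>) * fps_X ^ 5)"
proof -
  have i1: "(int_inv 1 :: 'a) = 1" by (rule int_inv_1[OF Q])
  have im1: "(int_inv (-1) :: 'a) = -1" by (simp only: int_inv_uminus i1)
  have m1: "fps_const (-1::'a) = -1" by (metis fps_const_neg fps_const_1_eq_1)
  have "tcoeff 2 (\<Sum>j<12. of_int (Ltilde_signs ! j) * (fps_const fps_X ^ (2 - t_degree (Ltilde_aff_weights ! j)) * prod_list (map (wunit_inv P) (Ltilde_aff_weights ! j))))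
       = tcoeff 2 (fps_const (fps_const c) * (dilate (aff 4 2) (rexp \<alpha>) * fps_X ^ 5 * fps_const fps_X ^ 2))"
    using Ltilde_normalized_identity[OF Q f inv eq] by simp
  moreover have "tcoeff 2 (\<Sum>j<12. of_int (Ltilde_signs ! j) * (fps_const fps_X ^ (2 - t_degree (Ltilde_aff_weights ! j)) * prod_list (map (wunit_inv P) (Ltilde_aff_weights ! j))))
      = (\<Sum>j<12. of_int (Ltilde_signs ! j) * tcoeff (t_degree (Ltilde_aff_weights ! j)) (prod_list (map (wunit_inv P) (Ltilde_aff_weights ! j))))"
  proof -
    have "tcoeff 2 (fps_const fps_X ^ (2 - n) * A) = tcoeff n (A :: 'a fps fps)" if "n \<le> 2" for n A
      using tcoeff_shift[of n "2 - n" A] that by simp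
    then show ?thesis
      unfolding tcoeff_sum tcoeff_of_int_mult using Ltilde_aff_weights_props by (intro sum.cong refl) simp
  qed
  moreover have "tcoeff 2 (fps_const (fps_const c) * (dilate (aff 4 2) (rexp \<alpha>) * fps_X ^ 5 * fps_const fps_X ^ 2))
      = fps_const c * (fps_scale 4 (rexp \<alpha>) * fps_X ^ 5)"
  proof -
    have "tcoeff 2 (fps_const (fps_X :: 'a fps) ^ 2 * (dilate (aff 4 2) (rexp \<alpha>) * fps_X ^ 5))
        = tcoeff 0 (dilate (aff 4 2) (rexp \<alpha>) * fps_X ^ 5)"
      using tcoeff_shift[of 0 2] by (simp add: numeral_2_eq_2)
    then show ?thesis by (simp add: tcoeff_const_mult tcoeff_0_mult tcoeff_0_dilate_aff tcoeff_0_X_power ac_simps del: fps_const_power)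
  qed
  ultimately have "tcoeff 0 (recip_dilate P 1 0) * tcoeff 0 (recip_dilate P 1 0) * Delta3_contribution P 2 + tcoeff 0 (recip_dilate P 2 0) * tcoeff 0 (recip_dilate P (-1) 0) * Delta3_contribution P 3
      - tcoeff 0 (recip_dilate P 2 0) * tcoeff 0 (recip_dilate P 1 0) * Delta3_contribution P 1 = fps_const c * (fps_scale 4 (rexp \<alpha>) * fps_X ^ 5)"
    using Ltilde_tcoeff_2_sum[of P] by simp
  then show ?thesis
    using m1 by (simp add: Delta3_contribution_eq[OF Q _ P0 P1 ev] tcoeff_0_recip_dilate[OF Q] i1 im1 fps_scale_by_1 ev algebra_simps)
qed

lemma sn_defect_nth_le_5:
  fixes P :: "'a::comm_ring_1 fps"
  assumes Q: "Q_algebra TYPE('a)" and P0: "P $ 0 = 1" and ev: "fps_scale (-1) P = P" and k: "k \<le> 5"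
  shows "sn_defect P $ k = 0"
proof -
  have "P $ Suc 0 = 0" "P $ Suc (Suc (Suc 0)) = 0" "P $ Suc (Suc (Suc (Suc (Suc 0)))) = 0"
    by (simp_all add: even_fps_nth_odd[OF Q ev])
  moreover have "k = 0 \<or> k = 1 \<or> k = 2 \<or> k = 3 \<or> k = 4 \<or> k = 5" using k by auto
  ultimately show ?thesis
    using P0 by (elim disjE) (simp_all add: sn_defect_def theta12_def power3_eq_cube fps_mult_nth
        fps_X_power_mult_nth numeral_eq_Suc atLeast0AtMost atMost_Suc algebra_simps)
qed

lemma pow2_pow3_bound: "n \<ge> 5 \<Longrightarrow> 27 * 2 ^ n < 4 * 3 ^ n + (108::int)"
proof (induction n rule: dec_induct)
  case (step n)
  have "(3::int) ^ 3 \<le> 3 ^ n" using step(1) by (intro power_increasing) auto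
  then show ?case using step by simp
qed simp

text \<open>The coefficient of $x^N$ in the functional equation of \<open>Ltilde_functional_eq\<close> involves
  the $N$-th coefficient of \<open>sn_defect P\<close> only through the factor
  $2^N/4 - 3^N/27 - 1 = (27 \cdot 2^N - 4 \cdot 3^N - 108)/108$, which is non-zero for $N \ge 5$.\<close>

lemma Ltilde_coefficient_cancel:
  assumes Q: "Q_algebra TYPE('a::comm_ring_1)" and N: "N \<ge> 5"
    and eq: "(int_inv 2 ^ 2 * 2 ^ N - int_inv 3 ^ 3 * 3 ^ N - 1) * x = (0::'a)"
  shows "x = 0"
proof (rule Q_algebra_of_int_mult_eq_0[OF Q])
  show "27 * 2 ^ N - 4 * 3 ^ N - 108 \<noteq> (0::int)"
    using pow2_pow3_bound[OF N] by linarith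
  define u where "u = (int_inv 2 :: 'a)"
  define w where "w = (int_inv 3 :: 'a)"
  define T2 where "T2 = (2 :: 'a) ^ N"
  define T3 where "T3 = (3 :: 'a) ^ N"
  have "2 * u = 1" "3 * w = 1"
    using of_int_mult_int_inv[OF Q, of 2] of_int_mult_int_inv[OF Q, of 3] by (simp_all add: u_def w_def)
  have "of_int (27 * 2 ^ N - 4 * 3 ^ N - 108) = 27 * (2 * u) ^ 2 * T2 - 4 * (3 * w) ^ 3 * T3 - (108 :: 'a)"
    by (simp add: T2_def T3_def \<open>2 * u = 1\<close> \<open>3 * w = 1\<close>)
  also have "\<dots> = 108 * (u ^ 2 * T2 - w ^ 3 * T3 - 1)"
    by (simp add: algebra_simps power2_eq_square power3_eq_cube)
  finally have "of_int (27 * 2 ^ N - 4 * 3 ^ N - 108) = 108 * (int_inv 2 ^ 2 * 2 ^ N - int_inv 3 ^ 3 * 3 ^ N - 1 :: 'a)"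
    by (simp only: u_def w_def T2_def T3_def)
  then show "of_int (27 * 2 ^ N - 4 * 3 ^ N - 108) * x = 0"
    using eq by (simp only: mult.assoc mult_zero_right)
qed

lemma Ltilde_functional_eq_imp_0:
  fixes P :: "'a::comm_ring_1 fps"
  assumes Q: "Q_algebra TYPE('a)" and P0: "P $ 0 = 1" and ev: "fps_scale (-1) P = P"
    and H: "P * P * (fps_const (int_inv 2 ^ 3) * fps_scale 2 (sn_defect P))
      - fps_const (int_inv 2) * fps_scale 2 P * P * (fps_const (int_inv 3 ^ 3) * fps_scale 3 (sn_defect P))
      - fps_const (int_inv 2) * fps_scale 2 P * P * sn_defect P = fps_const c * (fps_scale 4 (rexp \<alpha>) * fps_X ^ 5)"
  shows "c = 0"
proof -
  have "fps_scale k (sn_defect P) $ j = 0" "sn_defect P $ j = 0" if "j \<le> 5" for j k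
    using sn_defect_nth_le_5[OF Q P0 ev that] by (simp_all add: fps_scale_def)
  then have "(fps_const c * (fps_scale 4 (rexp \<alpha>) * fps_X ^ 5)) $ 5 = 0"
    unfolding H[symmetric] by (simp add: fps_mult_nth_eq_0 mult.assoc)
  then show "c = 0"
    using rexp_nth_0[OF Q] by (simp add: fps_X_power_mult_right_nth fps_scale_def)
qed

lemma Ltilde_operator_nth:
  fixes P X :: "'a::comm_ring_1 fps"
  assumes P0: "P $ 0 = 1" and lower: "\<And>j. j < N \<Longrightarrow> X $ j = 0"
  shows "(fps_const (int_inv 2) ^ 2 * (P * fps_scale 2 X)
      - fps_const (int_inv 3) ^ 3 * (fps_scale 2 P * fps_scale 3 X) - fps_scale 2 P * X) $ N
    = (int_inv 2 ^ 2 * 2 ^ N - int_inv 3 ^ 3 * 3 ^ N - 1) * X $ N"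
proof -
  have lower': "fps_scale k X $ (N - i) = 0" "X $ (N - i) = 0" if "0 < i" "i \<le> N" for i k
    using lower[of "N - i"] that by (simp_all add: fps_scale_def)
  have "(P * fps_scale 2 X) $ N = P $ 0 * fps_scale 2 X $ N"
    by (rule fps_mult_nth_eq_head[OF lower'(1)])
  moreover have "(fps_scale 2 P * fps_scale 3 X) $ N = fps_scale 2 P $ 0 * fps_scale 3 X $ N"
    by (rule fps_mult_nth_eq_head[OF lower'(1)])
  moreover have "(fps_scale 2 P * X) $ N = fps_scale 2 P $ 0 * X $ N"
    by (rule fps_mult_nth_eq_head[OF lower'(2)])
  ultimately show ?thesis
    unfolding fps_const_power fps_sub_nth fps_mult_left_const_nth
    using P0 by (simp add: fps_scale_def algebra_simps)
qed

lemma Ltilde_functional_eq_imp_sn_defect_0: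
  fixes P gt :: "'a::comm_ring_1 fps"
  assumes Q: "Q_algebra TYPE('a)" and inv: "gt * P = 1" and P0: "P $ 0 = 1" and ev: "fps_scale (-1) P = P"
    and H: "P * P * (fps_const (int_inv 2 ^ 3) * fps_scale 2 (sn_defect P))
      - fps_const (int_inv 2) * fps_scale 2 P * P * (fps_const (int_inv 3 ^ 3) * fps_scale 3 (sn_defect P))
      - fps_const (int_inv 2) * fps_scale 2 P * P * sn_defect P = 0"
  shows "sn_defect P = 0"
proof -
  define X where "X = sn_defect P"
  define i2 where "i2 = fps_const (int_inv 2 :: 'a)"
  define i3 where "i3 = fps_const (int_inv 3 :: 'a)"
  define K where "K = i2 ^ 2 * (P * fps_scale 2 X) - i3 ^ 3 * (fps_scale 2 P * fps_scale 3 X) - fps_scale 2 P * X"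
  have "i2 * P * K = P * P * (i2 ^ 3 * fps_scale 2 X) - i2 * fps_scale 2 P * P * (i3 ^ 3 * fps_scale 3 X)
      - i2 * fps_scale 2 P * P * X"
    by (simp add: K_def algebra_simps power2_eq_square power3_eq_cube)
  also have "\<dots> = 0" using H by (simp add: i2_def i3_def X_def)
  finally have H0: "i2 * P * K = 0" .
  have "2 * i2 = 1" using of_int_mult_int_inv[OF Q, of 2] by (simp add: i2_def fps_numeral_fps_const)
  then have "K = (2 * i2) * (gt * P) * K" using inv by simp
  also have "\<dots> = 2 * gt * (i2 * P * K)" by (simp add: ac_simps)
  finally have K0: "K = 0" using H0 by simp
  have "X $ N = 0" for N
  proof (induction N rule: less_induct)
    case (less N)
    show ?case
    proof (cases "N \<le> 5")
      case True then show ?thesis unfolding X_def by (rule sn_defect_nth_le_5[OF Q P0 ev])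
    next
      case False
      have "K $ N = (int_inv 2 ^ 2 * 2 ^ N - int_inv 3 ^ 3 * 3 ^ N - 1) * X $ N"
        unfolding K_def i2_def i3_def by (rule Ltilde_operator_nth[OF P0 less.IH])
      then have "(int_inv 2 ^ 2 * 2 ^ N - int_inv 3 ^ 3 * 3 ^ N - 1) * X $ N = 0" using K0 by simp
      moreover have "N \<ge> 5" using False by simp
      ultimately show ?thesis by (rule Ltilde_coefficient_cancel[OF Q, rotated])
    qed
  qed
  then show ?thesis by (simp add: X_def fps_eq_iff)
qed

section \<open>From \<open>sn_defect P = 0\<close> to the elliptic sine\<close>

lemma theta12_eq:
  "2 * theta12 P = fps_X ^ 2 * fps_deriv (fps_deriv P) - 2 * fps_X * fps_deriv P + 2 * (P :: 'a::comm_ring_1 fps)"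
proof (rule fps_ext)
  fix N
  consider "N = 0" | "N = 1" | n where "N = Suc (Suc n)" by (metis One_nat_def not0_implies_Suc)
  then show "(2 * theta12 P) $ N = (fps_X ^ 2 * fps_deriv (fps_deriv P) - 2 * fps_X * fps_deriv P + 2 * P) $ N"
  proof cases
    case 3
    have "(2 * theta12 P) $ N = 2 * (of_nat (Suc n choose 2) * P $ N)"
      using 3 by (simp only: fps_numeral_fps_const fps_mult_left_const_nth) (simp add: theta12_def)
    also have "\<dots> = of_nat (Suc n * n) * P $ N"
    proof -
      have "2 * (Suc n choose 2) = Suc n * n" by (simp add: choose_two)
      then show ?thesis by (metis (mono_tags) mult.assoc of_nat_mult of_nat_numeral)
    qed
    also have "\<dots> = (fps_X ^ 2 * fps_deriv (fps_deriv P) - 2 * fps_X * fps_deriv P + 2 * P) $ N"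
      using 3 by (simp only: fps_numeral_fps_const) (simp add: fps_X_power_mult_nth numeral_2_eq_2 algebra_simps)
    finally show ?thesis .
  qed (simp_all add: theta12_def fps_X_power_mult_nth fps_numeral_fps_const binomial_eq_0)
qed

lemma sn_ode_identity:
  fixes p p1 p2 x c :: "'a::comm_ring_1"
  assumes R: "x ^ 2 * p2 = 2 * p ^ 3 - c * x ^ 2 * p - 2 * p + 2 * x * p1"
  shows "x * (2 * (p - x * p1) * (- (x * p2)) - 4 * p ^ 3 * p1 + c * (2 * x * p ^ 2 + x ^ 2 * (2 * p * p1)))
       = 4 * ((p - x * p1) ^ 2 - p ^ 4 + c * x ^ 2 * p ^ 2)"
proof -
  have "x * (2 * (p - x * p1) * (- (x * p2)) - 4 * p ^ 3 * p1 + c * (2 * x * p ^ 2 + x ^ 2 * (2 * p * p1)))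
      = - 2 * (p - x * p1) * (x ^ 2 * p2) + x * (- 4 * p ^ 3 * p1 + c * (2 * x * p ^ 2 + x ^ 2 * (2 * p * p1)))"
    by (simp add: algebra_simps power2_eq_square)
  also have "\<dots> = 4 * ((p - x * p1) ^ 2 - p ^ 4 + c * x ^ 2 * p ^ 2)"
    unfolding R by (simp add: algebra_simps power2_eq_square power3_eq_cube power4_eq_xxxx)
  finally show ?thesis .
qed

lemma fps_X_deriv_eq_4_imp_monomial:
  fixes H :: "'a::comm_ring_1 fps"
  assumes Q: "Q_algebra TYPE('a)" and e: "fps_X * fps_deriv H = 4 * H"
  shows "H = fps_const (H $ 4) * fps_X ^ 4"
proof (rule fps_ext)
  fix N
  have "(fps_X * fps_deriv H) $ N = (4 * H) $ N" using e by simp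
  then have "of_nat N * H $ N = 4 * H $ N"
    by (cases N) (simp_all only: fps_numeral_fps_const, simp_all add: mult.commute)
  then have "of_int (int N - 4) * H $ N = 0" by (simp add: algebra_simps)
  then have "H $ N = 0" if "N \<noteq> 4" using Q_algebra_of_int_mult_eq_0[OF Q, of "int N - 4"] that by simp
  then show "H $ N = (fps_const (H $ 4) * fps_X ^ 4) $ N" by (simp add: fps_X_power_mult_right_nth)
qed

text \<open>The second order equation \<open>sn_defect P = 0\<close> has the first integral below: the series
  $(P - x P')^2 - P^4 + 6 P_2 x^2 P^2$ is an eigenvector of $x\,d/dx$ with eigenvalue $4$.\<close>

lemma sn_defect_0_first_integral:
  fixes P :: "'a::comm_ring_1 fps"
  assumes Q: "Q_algebra TYPE('a)" and "sn_defect P = 0"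
  defines "H \<equiv> (P - fps_X * fps_deriv P) ^ 2 - P ^ 4 + fps_const (2 * (3 * P $ 2)) * fps_X ^ 2 * P ^ 2"
  shows "H = fps_const (H $ 4) * fps_X ^ 4"
proof (rule fps_X_deriv_eq_4_imp_monomial[OF Q])
  define c where "c = fps_const (2 * (3 * P $ 2))"
  define P1 where "P1 = fps_deriv P"
  define P2 where "P2 = fps_deriv P1"
  define D where "D = P - fps_X * P1"
  have HD: "H = D ^ 2 - P ^ 4 + c * fps_X ^ 2 * P ^ 2" by (simp add: H_def D_def c_def P1_def)
  have c2: "c = 2 * fps_const (3 * P $ 2)"
    by (simp add: c_def fps_numeral_fps_const)
  have "fps_X ^ 2 * P2 = 2 * theta12 P + 2 * fps_X * P1 - 2 * P"
    unfolding P2_def P1_def by (subst theta12_eq) (simp add: algebra_simps)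
  also have "theta12 P = P ^ 3 - fps_const (3 * P $ 2) * fps_X ^ 2 * P"
    using assms(2) by (simp add: sn_defect_def)
  finally have R: "fps_X ^ 2 * P2 = 2 * P ^ 3 - c * fps_X ^ 2 * P - 2 * P + 2 * fps_X * P1"
    unfolding c2 by (simp add: algebra_simps)
  have dD: "fps_deriv D = - (fps_X * P2)" by (simp add: D_def P2_def P1_def fps_deriv_mult)
  have "fps_deriv H = 2 * D * (- (fps_X * P2)) - 4 * P ^ 3 * P1 + c * (2 * fps_X * P ^ 2 + fps_X ^ 2 * (2 * P * P1))"
    unfolding HD using dD
    by (simp add: fps_deriv_power fps_deriv_mult c_def P1_def algebra_simps power2_eq_square power3_eq_cube
        fps_numeral_fps_const fps_const_neg[symmetric] del: fps_const_neg)
  then show "fps_X * fps_deriv H = 4 * H"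
    unfolding HD D_def using sn_ode_identity[OF R] by simp
qed

lemma fps_deriv_X_mult_inverse:
  fixes gt P :: "'a::comm_ring_1 fps"
  assumes "gt * P = 1"
  shows "fps_deriv (fps_X * gt) * P ^ 2 = P - fps_X * fps_deriv P"
proof -
  have "fps_deriv gt * P = - (gt * fps_deriv P)"
    using arg_cong[OF assms, of fps_deriv] by (simp add: fps_deriv_mult algebra_simps add_eq_0_iff)
  then have "fps_deriv (fps_X * gt) * P ^ 2 = P * (gt * P) - fps_X * fps_deriv P * (gt * P)"
    by (simp add: fps_deriv_mult algebra_simps power2_eq_square)
  then show ?thesis using assms by simp
qed

lemma sn_defect_0_imp_is_sn:
  fixes gt P :: "'a::comm_ring_1 fps"
  assumes Q: "Q_algebra TYPE('a)" and inv: "gt * P = 1" and gt0: "gt $ 0 = 1"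
    and sn: "sn_defect P = 0"
  shows "\<exists>\<epsilon>. is_sn (3 * P $ 2) \<epsilon> (fps_X * gt)"
proof -
  define g where "g = fps_X * gt"
  define c where "c = fps_const (2 * (3 * P $ 2))"
  define H where "H = (P - fps_X * fps_deriv P) ^ 2 - P ^ 4 + c * fps_X ^ 2 * P ^ 2"
  have Hq: "H = fps_const (H $ 4) * fps_X ^ 4"
    unfolding H_def c_def by (rule sn_defect_0_first_integral[OF Q sn])
  have "fps_deriv g ^ 2 = fps_deriv g ^ 2 * (gt * P) ^ 4" using inv by simp
  also have "\<dots> = (fps_deriv g * P ^ 2) ^ 2 * gt ^ 4"
    by (simp add: algebra_simps power2_eq_square power4_eq_xxxx)
  also have "\<dots> = (H + P ^ 4 - c * fps_X ^ 2 * P ^ 2) * gt ^ 4"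
    unfolding g_def fps_deriv_X_mult_inverse[OF inv] by (simp add: H_def)
  also have "\<dots> = fps_const (H $ 4) * (fps_X * gt) ^ 4 + (gt * P) ^ 4 - c * (fps_X * gt) ^ 2 * (gt * P) ^ 2"
    by (subst Hq) (simp add: algebra_simps power2_eq_square power4_eq_xxxx)
  also have "\<dots> = 1 - c * g ^ 2 + fps_const (H $ 4) * g ^ 4"
    using inv by (simp add: g_def)
  finally have "is_sn (3 * P $ 2) (H $ 4) g"
    using gt0 by (simp add: is_sn_def g_def c_def)
  then show ?thesis unfolding g_def by blast
qed

lemma odd_fps_factor:
  fixes g :: "'a::comm_ring_1 fps"
  assumes Q: "Q_algebra TYPE('a)" and g0: "g $ 0 = 0" and g1: "g $ 1 = 1" and odd: "fps_scale (-1) g = - g"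
  obtains gt P where "g = fps_X * gt" "gt $ 0 = 1" "gt * P = 1" "P $ 0 = 1" "fps_scale (-1) P = P"
proof -
  define gt where "gt = fps_shift 1 g"
  have g: "g = fps_X * gt"
  proof (rule fps_ext)
    fix n show "g $ n = (fps_X * gt) $ n" using g0 by (cases n) (simp_all add: gt_def)
  qed
  have gt0: "gt $ 0 = 1" using g1 by (simp add: gt_def)
  define P where "P = fps_right_inverse gt 1"
  have inv: "gt * P = 1" unfolding P_def by (rule fps_right_inverse) (simp add: gt0)
  have "(gt * P) $ 0 = 1" using inv by simp
  then have "P $ 0 = 1" using gt0 by simp
  have "fps_const (-1 :: 'a) = -1" by (metis fps_const_neg fps_const_1_eq_1)
  then have "- (fps_X * fps_scale (-1) gt) = - (fps_X * gt)"
    using odd unfolding g by (simp add: fps_scale_mult fps_scale_X)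
  then have "fps_X ^ 1 * (fps_scale (-1) gt - gt) = 0" by (simp add: algebra_simps)
  then have evgt: "fps_scale (-1) gt = gt" using fps_X_power_mult_cancel by fastforce
  have "gt * fps_scale (-1) P = 1"
    using arg_cong[OF inv, of "fps_scale (-1)"] evgt by (simp add: fps_scale_mult fps_scale_one)
  then have "P = (gt * P) * fps_scale (-1) P" by (simp add: ac_simps)
  then have "fps_scale (-1) P = P" using inv by simp
  with g gt0 inv \<open>P $ 0 = 1\<close> show ?thesis using that by blast
qed

lemma Ltilde_rigidity_imp_sn_defect_0:
  fixes gt P :: "'a::comm_ring_1 fps"
  assumes Q: "Q_algebra TYPE('a)" and f: "f = rexp \<alpha> * (fps_X * gt)" and inv: "gt * P = 1"
    and P0: "P $ 0 = 1" and ev: "fps_scale (-1) P = P" and rigid: "rigid_on 5 f Ltilde_data"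
  shows "sn_defect P = 0"
proof -
  obtain c where eq: "equiv_genus_eq 5 f Ltilde_data c" using rigid by (auto simp: rigid_on_def)
  have P1: "P $ 1 = 0" using even_fps_nth_odd[OF Q ev] by simp
  note functional_eq = Ltilde_functional_eq[OF Q f inv eq P0 P1 ev]
  have "c = 0" by (rule Ltilde_functional_eq_imp_0[OF Q P0 ev functional_eq])
  show ?thesis
    by (rule Ltilde_functional_eq_imp_sn_defect_0[OF Q inv P0 ev]) (use functional_eq \<open>c = 0\<close> in simp)
qed

theorem theorem2p2:
  fixes f :: "'a::comm_ring_1 fps"
  assumes QA: "Q_algebra TYPE('a)"
    and f_exp: "fps_nth f 0 = 0" "fps_nth f 1 = 1"
    and rigid_S6: "rigid_on 2 f S6_data"
    and S6_zero: "equiv_genus_eq 2 f S6_data 0"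
    and rigid_L: "rigid_on 5 f Ltilde_data"
  shows "\<exists>\<alpha> \<delta> \<epsilon> s. is_sn \<delta> \<epsilon> s \<and> f = rexp \<alpha> * s"
proof -
  obtain \<alpha> g where f: "f = rexp \<alpha> * g" and g: "g $ 0 = 0" "g $ 1 = 1" "fps_scale (-1) g = - g"
    using S6_rigidity_exp_odd_factor[OF QA f_exp S6_zero] .
  obtain gt P where gt: "g = fps_X * gt" "gt $ 0 = 1" and P: "gt * P = 1" "P $ 0 = 1" "fps_scale (-1) P = P"
    using odd_fps_factor[OF QA g] .
  have "sn_defect P = 0"
    using Ltilde_rigidity_imp_sn_defect_0[OF QA _ P rigid_L] f gt by simp
  then obtain \<epsilon> where "is_sn (3 * P $ 2) \<epsilon> g"
    using sn_defect_0_imp_is_sn[OF QA P(1) gt(2)] gt(1) by blast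
  with f show ?thesis by blast
qed

end
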